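(* Let $r\ge1$, $\mu\in\mathcal P_r$, $n\in\mathbb N$, and let $\mathbf x\in\Xi_n$, $\mathbf p\in\Pi_n$ be such that $d_r(\delta^{\mathbf p}_{\mathbf x},\mu)\le d_r(\delta^{\mathbf q}_{\mathbf y},\mu)$ for all $\mathbf y\in\Xi_n$, $\mathbf q\in\Pi_n$. Write $P_i=\sum_{j\le i}p_j$. Then for every $i$: (i) for $1\le i\le n-1$, $x_i<x_{i+1}$ implies $P_i\in[\mu(]-\infty,c_i[),\mu(]-\infty,c_i])]$ with $c_i=\frac12(x_i+x_{i+1})$; (ii) for $1\le i\le n$, $P_{i-1}<P_i$ implies $x_i\in Q^{F_\mu}_{(P_{i-1}+P_i)/2}$ if $r=1$, and $x_i=\tau_r^{f_i}$ with $f_i$ the restriction of $F_\mu^{-1}$ to $[P_{i-1},P_i]$ if $r>1$. Moreover, if ${\rm supp}\,\mu$ has at most $n$ points then $\delta^{\mathbf p}_{\mathbf x}=\mu$, whereas if ${\rm supp}\,\mu$ has more than $n$ points then $x_i<x_{i+1}$ for all $1\le i\le n-1$ and $P_{i-1}<P_i$ for all $1\le i\le n$.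
   Context: $\mathcal P$ denotes the set of Borel probability measures on $\mathbb R$; $\mathcal P_r=\{\mu\in\mathcal P:\int|x|^r{\rm d}\mu(x)<\infty\}$. For $\mu\in\mathcal P$, $F_\mu(x)=\mu(]-\infty,x])$ and $F_\mu^{-1}(t)=\sup\{x: F_\mu(x)\le t\}$, $t\in]0,1[$. $d_r(\mu,\nu)=\big(\int_0^1|F_\mu^{-1}(t)-F_\nu^{-1}(t)|^r{\rm d}t\big)^{1/r}$. $\Xi_n=\{\mathbf x\in\mathbb R^n:x_1\le\dots\le x_n\}$, $\Pi_n=\{\mathbf p\in\mathbb R^n:p_i\ge0,\sum_ip_i=1\}$, $\delta^{\mathbf p}_{\mathbf x}=\sum_ip_i\delta_{x_i}$, $P_0=0$. For $s\in]0,1[$, $Q^{F_\mu}_s=[\inf\{x:F_\mu(x)\ge s\},\sup\{x:F_\mu(x)\le s\}]$. For a bounded non-degenerate interval $J$ and $f\in L^r(J)$, $r>1$, $\tau_r^f$ is the unique real minimizer of $t\mapsto\|f-t\|_{L^r(J)}$. *)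

theory Defs
  imports "HOL-Probability.Probability"
begin

definition in_Pr :: "real \<Rightarrow> real measure \<Rightarrow> bool" where
  "in_Pr r M \<longleftrightarrow> real_distribution M \<and> integrable M (\<lambda>x. \<bar>x\<bar> powr r)"

definition quantile :: "real measure \<Rightarrow> real \<Rightarrow> real" where
  "quantile M t = Sup {x. cdf M x \<le> t}"

definition d_r :: "real \<Rightarrow> real measure \<Rightarrow> real measure \<Rightarrow> real" where
  "d_r r M N = (LINT t:{0<..<1}|lborel. \<bar>quantile M t - quantile N t\<bar> powr r) powr (1 / r)"

text \<open>Xi_n and Pi_n, vectors indexed by 1..n.\<close>
definition Xi :: "nat \<Rightarrow> (nat \<Rightarrow> real) \<Rightarrow> bool" where
  "Xi n x \<longleftrightarrow> (\<forall>i. 1 \<le> i \<and> i < n \<longrightarrow> x i \<le> x (Suc i))"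

definition Pi_n :: "nat \<Rightarrow> (nat \<Rightarrow> real) \<Rightarrow> bool" where
  "Pi_n n p \<longleftrightarrow> (\<forall>i\<in>{1..n}. 0 \<le> p i) \<and> (\<Sum>i=1..n. p i) = 1"

definition discr :: "nat \<Rightarrow> (nat \<Rightarrow> real) \<Rightarrow> (nat \<Rightarrow> real) \<Rightarrow> real measure" where
  "discr n x p = measure_of UNIV (sets borel)
     (\<lambda>A. \<Sum>i=1..n. ennreal (p i) * indicator A (x i))"

definition Psum :: "(nat \<Rightarrow> real) \<Rightarrow> nat \<Rightarrow> real" where
  "Psum p i = (\<Sum>j=1..i. p j)"

definition Qset :: "real measure \<Rightarrow> real \<Rightarrow> real set" where
  "Qset M s = {Inf {x. cdf M x \<ge> s} .. Sup {x. cdf M x \<le> s}}"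

definition Lr_norm_J :: "real \<Rightarrow> real \<Rightarrow> real \<Rightarrow> (real \<Rightarrow> real) \<Rightarrow> real" where
  "Lr_norm_J r a b f = (LINT u:{a..b}|lborel. \<bar>f u\<bar> powr r) powr (1 / r)"

definition tau :: "real \<Rightarrow> real \<Rightarrow> real \<Rightarrow> (real \<Rightarrow> real) \<Rightarrow> real" where
  "tau r a b f = (THE t. \<forall>s. Lr_norm_J r a b (\<lambda>u. f u - t) \<le> Lr_norm_J r a b (\<lambda>u. f u - s))"

definition supp :: "real measure \<Rightarrow> real set" where
  "supp M = {x. \<forall>e>0. emeasure M {x - e<..<x + e} > 0}"

end

theory Submission
  imports Defs
begin

text \<open>Write \<open>f\<close> for the quantile function of \<open>\<mu>\<close>. The \<open>r\<close>-th power of \<open>d\<^sub>r(\<delta>, \<mu>)\<close> is the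
  \<open>L\<^sup>r(]0,1[)\<close> distance to \<open>f\<close> of the quantile of \<open>\<delta>\<close>, the nondecreasing step function with value
  \<open>x\<^sub>i\<close> on \<open>[P\<^sub>i\<^sub>-\<^sub>1, P\<^sub>i[\<close>; conversely every nondecreasing function on \<open>]0,1[\<close> with at most \<open>n\<close>
  values is almost everywhere such a step function. So the optimal step function minimises
  this cost among all monotone functions with at most \<open>n\<close> values, and each claim is proved by
  exhibiting a cheaper competitor.
  (i) Moving the jump from \<open>x\<^sub>i\<close> to \<open>x\<^sub>i\<^sub>+\<^sub>1\<close> towards the set where \<open>f\<close> crosses the midpoint lowers
  the error pointwise.
  (ii) The cost \<open>c \<mapsto> \<integral> |c - f|\<^sup>r\<close> of a block is convex in \<open>c\<close>. If \<open>x\<^sub>i\<close> did not minimise it, a small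
  move of the whole run of blocks sharing the value \<open>x\<^sub>i\<close> would lower the total cost: it keeps
  the step function monotone, and the other blocks of the run do not get worse because
  \<open>|w - y|\<^sup>r - |c - y|\<^sup>r\<close> is monotone in \<open>y\<close>. Minimisers are medians for \<open>r = 1\<close> and unique for
  \<open>r > 1\<close> by strict convexity.
  (iii) If \<open>supp \<mu>\<close> has at most \<open>n\<close> points, \<open>f\<close> itself is a competitor of cost \<open>0\<close>. Otherwise an
  empty block or two equal values leave one value unused, which can be spent on \<open>f(t\<^sub>0)\<close> at a
  point \<open>t\<^sub>0\<close> where the step function misses \<open>f\<close>; such a point exists because \<open>supp \<mu>\<close> is too
  large.\<close>

section \<open>Quantile functions\<close>

lemma bdd_above_cdf_le:
  assumes N: "real_distribution N" and t: "t < 1"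
  shows "bdd_above {x. cdf N x \<le> t}"
proof -
  interpret real_distribution N by (rule N)
  obtain b where b: "t < cdf N b"
    using order_tendstoD(1)[OF cdf_lim_at_top_prob t] by (metis eventually_at_top_linorder order_refl)
  show ?thesis
  proof (rule bdd_aboveI[of _ b])
    fix x assume "x \<in> {x. cdf N x \<le> t}"
    then show "x \<le> b" using b cdf_nondecreasing[of b x] by force
  qed
qed

lemma cdf_le_nonempty:
  assumes N: "real_distribution N" and t: "0 < t"
  shows "{x. cdf N x \<le> t} \<noteq> {}"
proof -
  interpret real_distribution N by (rule N)
  obtain a where "cdf N a < t"
    using order_tendstoD(2)[OF cdf_lim_at_bot t] by (metis eventually_at_bot_linorder order_refl)
  then show ?thesis by (auto intro!: exI[of _ a])
qed

lemma le_quantile_of_cdf_le: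
  assumes N: "real_distribution N" and "t < 1" and "cdf N x \<le> t"
  shows "x \<le> quantile N t"
  unfolding quantile_def using assms bdd_above_cdf_le[OF N] by (auto intro: cSup_upper)

lemma quantile_le_of_less_cdf:
  assumes N: "real_distribution N" and t: "0 < t" and "t < cdf N x"
  shows "quantile N t \<le> x"
  unfolding quantile_def
proof (rule cSup_least)
  show "{x. cdf N x \<le> t} \<noteq> {}" by (rule cdf_le_nonempty[OF N t])
  interpret real_distribution N by (rule N)
  fix z assume "z \<in> {x. cdf N x \<le> t}"
  then show "z \<le> x" using assms cdf_nondecreasing[of x z] by force
qed

lemma cdf_le_of_less_quantile:
  "real_distribution N \<Longrightarrow> 0 < t \<Longrightarrow> x < quantile N t \<Longrightarrow> cdf N x \<le> t"
  using quantile_le_of_less_cdf[of N t x] by force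

lemma less_cdf_of_quantile_less:
  "real_distribution N \<Longrightarrow> t < 1 \<Longrightarrow> quantile N t < x \<Longrightarrow> t < cdf N x"
  using le_quantile_of_cdf_le[of N t x] by force

lemma quantile_mono:
  assumes N: "real_distribution N" and "0 < t" "t \<le> t'" "t' < 1"
  shows "quantile N t \<le> quantile N t'"
  unfolding quantile_def
  by (rule cSup_subset_mono) (use cdf_le_nonempty[OF N] bdd_above_cdf_le[OF N] assms in auto)

lemma mono_on_quantile: "real_distribution N \<Longrightarrow> mono_on {0<..<1} (quantile N)"
  by (auto intro!: mono_onI quantile_mono)

lemma less_quantile_of_cdf_less:
  assumes N: "real_distribution N" and t: "t < 1" and "cdf N z < t"
  shows "z < quantile N t"
proof -
  interpret real_distribution N by (rule N)
  have "\<forall>\<^sub>F x in at_right z. cdf N x < t"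
    using cdf_is_right_cont[of z] assms(3) unfolding continuous_within by (auto dest: order_tendstoD)
  then obtain x where "z < x" "cdf N x < t"
    by (metis eventually_at_right_field dense)
  then show ?thesis using le_quantile_of_cdf_le[OF N t, of x] by linarith
qed

lemma quantile_less_of_less_measure_lessThan:
  assumes N: "real_distribution N" and t: "0 < t" and "t < measure N {..<c}"
  shows "quantile N t < c"
proof -
  interpret real_distribution N by (rule N)
  have "\<forall>\<^sub>F x in at_left c. t < cdf N x"
    using cdf_at_left[of c] assms(3) by (auto dest: order_tendstoD)
  then obtain x where "x < c" "t < cdf N x"
    by (metis eventually_at_left_field dense)
  then show ?thesis using quantile_le_of_less_cdf[OF N t, of x] by linarith
qed

definition unit_lborel :: "real measure" where
  "unit_lborel = restrict_space lborel {0<..<1}"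

lemma space_unit_lborel [simp]: "space unit_lborel = {0<..<1}"
  by (simp add: unit_lborel_def space_restrict_space)

lemma sets_unit_lborel_iff: "A \<in> sets unit_lborel \<longleftrightarrow> A \<subseteq> {0<..<1} \<and> A \<in> sets borel"
  unfolding unit_lborel_def by (subst sets_restrict_space_iff) auto

lemma prob_space_unit_lborel: "prob_space unit_lborel"
  by (auto simp: unit_lborel_def emeasure_restrict_space space_restrict_space intro!: prob_spaceI)

lemma emeasure_unit_lborel: "A \<subseteq> {0<..<1} \<Longrightarrow> emeasure unit_lborel A = emeasure lborel A"
  unfolding unit_lborel_def by (subst emeasure_restrict_space) auto

lemma borel_measurable_unit_lborel_of_mono:
  fixes g :: "real \<Rightarrow> real"
  assumes "mono_on {0<..<1} g"
  shows "g \<in> borel_measurable unit_lborel"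
proof -
  have "sets unit_lborel = sets (restrict_space borel {0<..<1::real})"
    by (simp add: unit_lborel_def sets_restrict_space)
  then show ?thesis
    using borel_measurable_mono_on_fnc[OF assms] by (subst measurable_cong_sets) auto
qed

lemma borel_measurable_indicator_unit_lborel:
  "S \<in> sets borel \<Longrightarrow> (indicator S :: real \<Rightarrow> real) \<in> borel_measurable unit_lborel"
  unfolding unit_lborel_def by (rule measurable_restrict_space1) simp

lemma set_integral_eq_unit_lborel:
  "(LINT t:{0<..<1}|lborel. (g::real \<Rightarrow> real) t) = integral\<^sup>L unit_lborel g"
  unfolding unit_lborel_def set_lebesgue_integral_def
  using integral_restrict_space[of "{0<..<1::real}" lborel g] by simp

lemma AE_unit_lborel_not_in:
  assumes "finite S"
  shows "AE t in unit_lborel. t \<notin> S"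
proof -
  have "AE t in lborel. t \<notin> S"
    by (rule AE_not_in[OF finite_imp_null_set_lborel[OF assms]])
  then show ?thesis
    unfolding unit_lborel_def by (subst AE_restrict_space_iff) (auto elim: AE_mp)
qed

lemma integrable_indicator_mult_unit_lborel:
  fixes h :: "real \<Rightarrow> real"
  assumes h: "integrable unit_lborel h" and S: "S \<in> sets borel"
  shows "integrable unit_lborel (\<lambda>t. indicator S t * h t)"
proof (rule Bochner_Integration.integrable_bound[OF h])
  show "(\<lambda>t. indicator S t * h t) \<in> borel_measurable unit_lborel"
    using borel_measurable_indicator_unit_lborel[OF S] borel_measurable_integrable[OF h] by measurable
  show "AE t in unit_lborel. norm (indicator S t * h t) \<le> norm (h t)"
    by (auto simp: indicator_def)
qed

lemma integral_indicator_interval_unit_lborel: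
  assumes uv: "0 \<le> u" "u \<le> v" "v \<le> 1"
    and S: "{u<..<v} \<subseteq> S" "S \<subseteq> {u..v}" "S \<in> sets borel"
  shows "integral\<^sup>L unit_lborel (\<lambda>t. indicator S t * c) = c * (v - u)"
proof -
  have sub: "{u<..<v} \<subseteq> {0<..<1}" using uv by auto
  have "integral\<^sup>L unit_lborel (\<lambda>t. indicator S t * c)
      = integral\<^sup>L unit_lborel (\<lambda>t. indicator {u<..<v} t * c)"
  proof (rule integral_cong_AE)
    show "AE t in unit_lborel. indicator S t * c = indicator {u<..<v} t * c"
      using AE_unit_lborel_not_in[of "{u, v}"]
      by (rule AE_mp) (use S in \<open>auto intro!: AE_I2 simp: indicator_def\<close>)
  qed (use borel_measurable_indicator_unit_lborel S(3) in auto)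
  also have "\<dots> = integral\<^sup>L unit_lborel (indicator {u<..<v}) * c"
    by (rule integral_mult_left_zero)
  also have "integral\<^sup>L unit_lborel (indicator {u<..<v}) = measure unit_lborel {u<..<v}"
  proof -
    have "{u<..<v} \<inter> space unit_lborel = {u<..<v}" using sub by auto
    then show ?thesis using Bochner_Integration.integral_indicator[of unit_lborel "{u<..<v}"] by metis
  qed
  also have "measure unit_lborel {u<..<v} = v - u"
    using sub uv unfolding measure_def by (simp add: emeasure_unit_lborel)
  finally show ?thesis by simp
qed

lemma set_integral_Icc_eq_unit_lborel:
  fixes g :: "real \<Rightarrow> real"
  assumes ab: "0 \<le> a" "a < b" "b \<le> 1"
    and int: "integrable unit_lborel (\<lambda>t. indicator {a<..<b} t * g t)"
  shows "(LINT u:{a..b}|lborel. g u) = integral\<^sup>L unit_lborel (\<lambda>t. indicator {a<..<b} t * g t)"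
proof -
  have restr: "(\<lambda>t. indicator {0<..<1} t * (indicator {a<..<b} t * g t)) = (\<lambda>t. indicator {a<..<b} t * g t)"
    using ab by (auto simp: indicator_def)
  have "integrable lborel (\<lambda>t. indicator {a<..<b} t * g t)"
    using int unfolding unit_lborel_def by (subst (asm) integrable_restrict_space) (auto simp: restr)
  then have meas: "(\<lambda>t. indicator {a<..<b} t * g t) \<in> borel_measurable lborel"
    by (rule borel_measurable_integrable)
  have unit_eq: "integral\<^sup>L unit_lborel (\<lambda>t. indicator {a<..<b} t * g t)
      = integral\<^sup>L lborel (\<lambda>t. indicator {a<..<b} t * g t)"
    unfolding unit_lborel_def by (subst integral_restrict_space) (auto simp: restr)
  have split: "indicator {a..b} u *\<^sub>R g u
      = indicator {a<..<b} u * g u + indicator {a} u * g a + indicator {b} u * g b" for u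
    using ab by (auto simp: indicator_def)
  have "(LINT u:{a..b}|lborel. g u) = integral\<^sup>L lborel (\<lambda>t. indicator {a<..<b} t * g t)"
    unfolding set_lebesgue_integral_def
  proof (rule integral_cong_AE)
    show "(\<lambda>u. indicator {a..b} u *\<^sub>R g u) \<in> borel_measurable lborel"
      unfolding split using meas by measurable
    have "AE u in lborel. u \<notin> {a, b}"
      by (rule AE_not_in[OF finite_imp_null_set_lborel]) simp
    then show "AE u in lborel. indicator {a..b} u *\<^sub>R g u = indicator {a<..<b} u * g u"
      by (rule AE_mp) (auto intro!: AE_I2 simp: indicator_def)
  qed (rule meas)
  then show ?thesis using unit_eq by simp
qed

lemma distr_quantile:
  assumes N: "real_distribution N"
  shows "distr unit_lborel borel (quantile N) = N"
proof (intro cdf_unique ext)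
  interpret real_distribution N by (rule N)
  have meas: "quantile N \<in> borel_measurable unit_lborel"
    by (rule borel_measurable_unit_lborel_of_mono[OF mono_on_quantile[OF N]])
  interpret U: prob_space unit_lborel by (rule prob_space_unit_lborel)
  show "real_distribution (distr unit_lborel borel (quantile N))"
    using meas by auto
  show "real_distribution N" by (rule N)
  fix z
  let ?S = "{t\<in>{0<..<1}. quantile N t \<le> z}"
  have "{0<..<cdf N z} \<subseteq> ?S"
    using cdf_bounded_prob[of z] quantile_le_of_less_cdf[OF N] by fastforce
  moreover have "?S \<subseteq> {0<..<cdf N z} \<union> {cdf N z}"
  proof
    fix t assume t: "t \<in> ?S"
    then have "\<not> cdf N z < t" using less_quantile_of_cdf_less[OF N, of t z] by auto
    then show "t \<in> {0<..<cdf N z} \<union> {cdf N z}" using t by auto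
  qed
  ultimately have S_eq: "?S = {0<..<cdf N z} \<union> (?S \<inter> {cdf N z})"
    by blast
  have null: "?S \<inter> {cdf N z} \<in> null_sets lborel"
    by (rule finite_imp_null_set_lborel) auto
  have "cdf (distr unit_lborel borel (quantile N)) z
      = measure unit_lborel (quantile N -` {..z} \<inter> space unit_lborel)"
    using meas by (simp add: cdf_def measure_distr)
  also have "quantile N -` {..z} \<inter> space unit_lborel = ?S" by auto
  also have "measure unit_lborel ?S = measure lborel ?S"
    unfolding measure_def by (subst emeasure_unit_lborel) auto
  also have "\<dots> = measure lborel {0<..<cdf N z}"
    using null unfolding measure_def by (subst S_eq, subst emeasure_Un_null_set) auto
  also have "\<dots> = cdf N z" using cdf_nonneg[of z] by simp
  finally show "cdf (distr unit_lborel borel (quantile N)) z = cdf N z" .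
qed

lemma quantile_in_supp:
  assumes N: "real_distribution N" and t: "0 < t" "t < 1"
  shows "quantile N t \<in> supp N"
  unfolding supp_def
proof (intro CollectI allI impI)
  interpret real_distribution N by (rule N)
  fix e :: real assume e: "e > 0"
  let ?s = "quantile N t"
  have "cdf N (?s - e) \<le> t" "t < cdf N (?s + e/2)"
    using cdf_le_of_less_quantile[OF N t(1)] less_cdf_of_quantile_less[OF N t(2)] e by auto
  then have "0 < measure N {?s - e<..?s + e/2}"
    using cdf_diff_eq[of "?s - e" "?s + e/2"] e by simp
  also have "\<dots> \<le> measure N {?s - e<..<?s + e}"
    using e by (intro finite_measure_mono) auto
  finally show "emeasure N {?s - e<..<?s + e} > 0"
    by (simp add: emeasure_eq_measure)
qed

lemma supp_subset_of_quantile_in: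
  assumes N: "real_distribution N" and fin: "finite S" "finite V"
    and val: "\<And>t. t \<in> {0<..<1} \<Longrightarrow> t \<notin> S \<Longrightarrow> quantile N t \<in> V"
  shows "supp N \<subseteq> V"
proof
  interpret real_distribution N by (rule N)
  fix z assume z: "z \<in> supp N"
  show "z \<in> V"
  proof (rule ccontr)
    assume zV: "z \<notin> V"
    obtain d where d: "d > 0" "\<forall>v\<in>V. v \<noteq> z \<longrightarrow> d \<le> dist z v"
      using finite_set_avoid[OF fin(2), of z] by blast
    have "0 < emeasure N {z - d/2<..<z + d/2}" using z d unfolding supp_def by auto
    also have "\<dots> \<le> emeasure N {z - d/2<..z + d/2}" by (intro emeasure_mono) auto
    finally have "cdf N (z - d/2) < cdf N (z + d/2)"
      using cdf_diff_eq[of "z - d/2" "z + d/2"] d by (simp add: emeasure_eq_measure)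
    then have "infinite ({cdf N (z - d/2)<..<cdf N (z + d/2)} - S)"
      using fin(1) by (simp add: infinite_Ioo)
    then have "{cdf N (z - d/2)<..<cdf N (z + d/2)} - S \<noteq> {}" by (metis finite.emptyI)
    then obtain t where "t \<in> {cdf N (z - d/2)<..<cdf N (z + d/2)} - S" by blast
    then have t: "cdf N (z - d/2) < t" "t < cdf N (z + d/2)" "t \<notin> S" by auto
    have t01: "t \<in> {0<..<1}"
      using t cdf_nonneg[of "z - d/2"] cdf_bounded_prob[of "z + d/2"] by auto
    have "z - d/2 \<le> quantile N t" "quantile N t \<le> z + d/2"
      using le_quantile_of_cdf_le[OF N, of t "z - d/2"] quantile_le_of_less_cdf[OF N, of t "z + d/2"]
        t t01 by auto
    then have "dist z (quantile N t) < d" using d(1) by (simp add: dist_real_def abs_less_iff)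
    moreover have "d \<le> dist z (quantile N t)"
      using d(2) val[OF t01 t(3)] zV by auto
    ultimately show False by simp
  qed
qed

section \<open>Discrete measures and their quantiles\<close>

lemma Xi_le:
  assumes "Xi n y" "1 \<le> i" "i \<le> j" "j \<le> n"
  shows "y i \<le> y j"
  using assms(3,4)
proof (induction j)
  case (Suc j)
  show ?case
  proof (cases "i = Suc j")
    case False
    then have "y i \<le> y j" using Suc by simp
    also have "y j \<le> y (Suc j)" using assms(1,2) Suc False unfolding Xi_def by simp
    finally show ?thesis .
  qed simp
qed simp

lemma Xi_run_end:
  assumes y: "Xi n y" and i: "1 \<le> i" "i \<le> n"
  obtains k where "i \<le> k" "k \<le> n" "\<And>l. i \<le> l \<Longrightarrow> l \<le> k \<Longrightarrow> y l = y i"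
    "k < n \<Longrightarrow> y i < y (Suc k)"
proof -
  define K where "K = {l\<in>{i..n}. y l = y i}"
  have K: "finite K" "i \<in> K" unfolding K_def using i by auto
  define k where "k = Max K"
  have "k \<in> K" unfolding k_def by (rule Max_in[OF K(1)]) (use K in auto)
  then have k: "i \<le> k" "k \<le> n" "y k = y i" unfolding K_def by auto
  show ?thesis
  proof (rule that[OF k(1,2)])
    show "y l = y i" if "i \<le> l" "l \<le> k" for l
      using Xi_le[OF y, of i l] Xi_le[OF y, of l k] that i k by simp
    show "y i < y (Suc k)" if "k < n"
    proof -
      have "Suc k \<notin> K" using Max_ge[OF K(1)] unfolding k_def by fastforce
      then have "y (Suc k) \<noteq> y i" using that k unfolding K_def by simp
      moreover have "y i \<le> y (Suc k)" using Xi_le[OF y, of i "Suc k"] that i k by simp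
      ultimately show ?thesis by simp
    qed
  qed
qed

lemma Xi_run_start:
  assumes y: "Xi n y" and i: "1 \<le> i" "i \<le> n"
  obtains j where "1 \<le> j" "j \<le> i" "\<And>l. j \<le> l \<Longrightarrow> l \<le> i \<Longrightarrow> y l = y i"
    "1 < j \<Longrightarrow> y (j - 1) < y i"
proof -
  define K where "K = {l\<in>{1..i}. y l = y i}"
  have K: "finite K" "i \<in> K" unfolding K_def using i by auto
  define j where "j = Min K"
  have "j \<in> K" unfolding j_def by (rule Min_in[OF K(1)]) (use K in auto)
  then have j: "1 \<le> j" "j \<le> i" "y j = y i" unfolding K_def by auto
  show ?thesis
  proof (rule that[OF j(1,2)])
    show "y l = y i" if "j \<le> l" "l \<le> i" for l
      using Xi_le[OF y, of j l] Xi_le[OF y, of l i] that i j by simp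
    show "y (j - 1) < y i" if "1 < j"
    proof -
      have "j - 1 \<notin> K" using Min_le[OF K(1)] that unfolding j_def by fastforce
      then have "y (j - 1) \<noteq> y i" using that j unfolding K_def by simp
      moreover have "y (j - 1) \<le> y i" using Xi_le[OF y, of "j - 1" i] that i j by simp
      ultimately show ?thesis by simp
    qed
  qed
qed

lemma emeasure_discr:
  assumes "A \<in> sets borel"
  shows "emeasure (discr n y q) A = (\<Sum>i=1..n. ennreal (q i) * indicator A (y i))"
  unfolding discr_def
proof (rule emeasure_measure_of_sigma)
  show "sigma_algebra UNIV (sets borel)"
    using sets.sigma_algebra_axioms[of borel] by simp
  show "positive (sets borel) (\<lambda>A. \<Sum>i = 1..n. ennreal (q i) * indicator A (y i))"
    unfolding positive_def by simp
  show "countably_additive (sets borel) (\<lambda>A. \<Sum>i = 1..n. ennreal (q i) * indicator A (y i))"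
    unfolding countably_additive_def
  proof (intro allI impI)
    fix A :: "nat \<Rightarrow> real set" assume d: "disjoint_family A"
    have "(\<Sum>j. \<Sum>i = 1..n. ennreal (q i) * indicator (A j) (y i))
        = (\<Sum>i = 1..n. \<Sum>j. ennreal (q i) * indicator (A j) (y i))"
      by (rule suminf_sum) (simp add: summableI)
    also have "\<dots> = (\<Sum>i = 1..n. ennreal (q i) * indicator (\<Union>j. A j) (y i))"
      by (simp add: suminf_indicator[OF d])
    finally show "(\<Sum>j. \<Sum>i = 1..n. ennreal (q i) * indicator (A j) (y i))
        = (\<Sum>i = 1..n. ennreal (q i) * indicator (\<Union>j. A j) (y i))" .
  qed
qed (rule assms)

lemma sets_discr [simp, measurable_cong]: "sets (discr n y q) = sets borel"
  unfolding discr_def by (subst sets_measure_of) (auto simp: sets.sigma_sets_eq[of borel, simplified])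

lemma space_discr [simp]: "space (discr n y q) = UNIV"
  unfolding discr_def by (subst space_measure_of) auto

lemma measure_discr:
  assumes q: "Pi_n n q" and A: "A \<in> sets borel"
  shows "measure (discr n y q) A = (\<Sum>i=1..n. q i * indicator A (y i))"
proof -
  have nonneg: "\<And>i. i \<in> {1..n} \<Longrightarrow> 0 \<le> q i * indicator A (y i)"
    using q unfolding Pi_n_def by auto
  have "emeasure (discr n y q) A = (\<Sum>i=1..n. ennreal (q i * indicator A (y i)))"
    unfolding emeasure_discr[OF A] by (intro sum.cong refl) (auto simp: indicator_def)
  also have "\<dots> = ennreal (\<Sum>i=1..n. q i * indicator A (y i))"
    using nonneg by (rule sum_ennreal)
  finally have "measure (discr n y q) A = enn2real (ennreal (\<Sum>i=1..n. q i * indicator A (y i)))"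
    unfolding measure_def by simp
  also have "\<dots> = (\<Sum>i=1..n. q i * indicator A (y i))"
    using nonneg by (intro enn2real_ennreal sum_nonneg)
  finally show ?thesis .
qed

lemma real_distribution_discr:
  assumes q: "Pi_n n q"
  shows "real_distribution (discr n y q)"
proof -
  have "emeasure (discr n y q) UNIV = (\<Sum>i=1..n. ennreal (q i))"
    by (simp add: emeasure_discr)
  also have "\<dots> = ennreal (\<Sum>i=1..n. q i)"
    using q unfolding Pi_n_def by (intro sum_ennreal) auto
  finally have "emeasure (discr n y q) UNIV = 1" using q unfolding Pi_n_def by simp
  then show ?thesis
    unfolding real_distribution_def real_distribution_axioms_def by (auto intro!: prob_spaceI)
qed

lemma cdf_discr:
  assumes q: "Pi_n n q"
  shows "cdf (discr n y q) z = (\<Sum>i\<in>{i\<in>{1..n}. y i \<le> z}. q i)"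
proof -
  have "cdf (discr n y q) z = (\<Sum>i=1..n. if y i \<le> z then q i else 0)"
    unfolding cdf_def measure_discr[OF q atMost_borel] by (intro sum.cong refl) (auto simp: indicator_def)
  also have "\<dots> = (\<Sum>i\<in>{i\<in>{1..n}. y i \<le> z}. q i)"
    by (rule sum.inter_filter[symmetric]) simp
  finally show ?thesis .
qed

lemma Psum_0 [simp]: "Psum q 0 = 0"
  by (simp add: Psum_def)

lemma Psum_Suc: "Psum q (Suc i) = Psum q i + q (Suc i)"
  by (simp add: Psum_def)

lemma Psum_eq_1: "Pi_n n q \<Longrightarrow> Psum q n = 1"
  by (simp add: Psum_def Pi_n_def)

lemma Psum_mono:
  assumes q: "Pi_n n q" and "i \<le> j" "j \<le> n"
  shows "Psum q i \<le> Psum q j"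
  using assms(2,3)
proof (induction j)
  case (Suc j)
  show ?case
  proof (cases "i = Suc j")
    case False
    then have "Psum q i \<le> Psum q j" using Suc by simp
    moreover have "0 \<le> q (Suc j)" using q Suc unfolding Pi_n_def by auto
    ultimately show ?thesis by (simp add: Psum_Suc)
  qed simp
qed simp

lemma Psum_nonneg: "Pi_n n q \<Longrightarrow> i \<le> n \<Longrightarrow> 0 \<le> Psum q i"
  using Psum_mono[of n q 0 i] by simp

lemma Psum_le_1: "Pi_n n q \<Longrightarrow> i \<le> n \<Longrightarrow> Psum q i \<le> 1"
  using Psum_mono[of n q i n] Psum_eq_1[of n q] by simp

lemma Pi_n_imp_pos: "Pi_n n q \<Longrightarrow> 1 \<le> n"
  unfolding Pi_n_def by (cases n) auto

lemma Pi_n_increments: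
  assumes Q0: "Q 0 = 0" and Qn: "Q n = 1" and mono: "\<And>k k'. k \<le> k' \<Longrightarrow> k' \<le> n \<Longrightarrow> Q k \<le> Q k'"
  shows "Pi_n n (\<lambda>k. Q k - Q (k - 1))" and "Psum (\<lambda>k. Q k - Q (k - 1)) k = Q k"
proof -
  show Psum: "Psum (\<lambda>k. Q k - Q (k - 1)) k = Q k" for k
    by (induction k) (simp_all add: Psum_Suc Q0)
  show "Pi_n n (\<lambda>k. Q k - Q (k - 1))"
    unfolding Pi_n_def using Psum[of n] Qn mono[of "_ - 1"] by (auto simp: Psum_def)
qed

lemma sum_swap_pair:
  fixes g g' :: "nat \<Rightarrow> 'a::comm_monoid_add"
  assumes S: "finite S" "i \<in> S" "Suc i \<in> S"
    and rest: "\<And>j. j \<in> S - {i, Suc i} \<Longrightarrow> g' j = g j"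
    and pair: "g' i + g' (Suc i) = g i + g (Suc i)"
  shows "sum g' S = sum g S"
proof -
  have sub: "{i, Suc i} \<subseteq> S" using S by auto
  have "sum g' S = sum g' (S - {i, Suc i}) + sum g' {i, Suc i}"
    by (rule sum.subset_diff[OF sub S(1)])
  also have "sum g' (S - {i, Suc i}) = sum g (S - {i, Suc i})"
    by (rule sum.cong[OF refl rest])
  also have "sum g' {i, Suc i} = sum g {i, Suc i}" using pair by simp
  also have "sum g (S - {i, Suc i}) + sum g {i, Suc i} = sum g S"
    by (rule sum.subset_diff[OF sub S(1), symmetric])
  finally show ?thesis .
qed

lemma card_insert_image_remove_le:
  assumes "i \<in> {1..n}"
  shows "card (insert w (y ` ({1..n} - {i}))) \<le> n"
proof -
  have "card (insert w (y ` ({1..n} - {i}))) \<le> Suc (card (y ` ({1..n} - {i})))"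
    by (simp add: card_insert_if)
  also have "card (y ` ({1..n} - {i})) \<le> card ({1..n} - {i})" by (rule card_image_le) simp
  also have "card ({1..n} - {i}) = n - 1" using assms by simp
  finally show ?thesis using assms by simp
qed

text \<open>The quantile of \<open>discr n y q\<close> at \<open>t\<close> is \<open>y l\<close> for the block index \<open>l\<close> of \<open>t\<close>,
  the unique \<open>l\<close> with \<open>Psum q (l - 1) \<le> t < Psum q l\<close> (meaningful for \<open>0 \<le> t < 1\<close>).\<close>

definition block_index :: "(nat \<Rightarrow> real) \<Rightarrow> real \<Rightarrow> nat" where
  "block_index q t = (LEAST k. t < Psum q k)"

definition step_quantile :: "(nat \<Rightarrow> real) \<Rightarrow> (nat \<Rightarrow> real) \<Rightarrow> real \<Rightarrow> real" where
  "step_quantile y q t = y (block_index q t)"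

lemma block_index_bounds:
  assumes q: "Pi_n n q" and t: "0 \<le> t" "t < 1"
  shows "1 \<le> block_index q t" "block_index q t \<le> n"
    "Psum q (block_index q t - 1) \<le> t" "t < Psum q (block_index q t)"
proof -
  have ex: "t < Psum q n" using Psum_eq_1[OF q] t by simp
  show "block_index q t \<le> n" unfolding block_index_def by (rule Least_le) (rule ex)
  show lt: "t < Psum q (block_index q t)" unfolding block_index_def by (rule LeastI) (rule ex)
  show ge: "1 \<le> block_index q t"
    using lt t by (cases "block_index q t") auto
  have "\<not> t < Psum q (block_index q t - 1)"
    unfolding block_index_def by (rule not_less_Least) (use ge in \<open>simp add: block_index_def\<close>)
  then show "Psum q (block_index q t - 1) \<le> t" by simp
qed

lemma block_index_le: "t < Psum q i \<Longrightarrow> block_index q t \<le> i"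
  unfolding block_index_def by (rule Least_le)

lemma block_index_gt:
  assumes q: "Pi_n n q" and t: "0 \<le> t" "t < 1" and "Psum q i \<le> t" "i \<le> n"
  shows "i < block_index q t"
proof (rule ccontr)
  assume "\<not> i < block_index q t"
  then have "Psum q (block_index q t) \<le> Psum q i" by (intro Psum_mono[OF q]) (use assms in auto)
  then show False using block_index_bounds(4)[OF q t] assms by auto
qed

lemma block_index_eqI:
  assumes q: "Pi_n n q" and t: "0 \<le> t" "t < 1" and l: "1 \<le> l" "l \<le> n"
    and "Psum q (l - 1) \<le> t" "t < Psum q l"
  shows "block_index q t = l"
proof -
  have "l - 1 < block_index q t" by (rule block_index_gt[OF q t]) (use assms in auto)
  then show ?thesis using block_index_le[of t q l] assms by linarith
qed

lemma step_quantile_le: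
  assumes y: "Xi n y" and q: "Pi_n n q" and t: "t \<in> {0<..<1}" and "t < Psum q i" "i \<le> n"
  shows "step_quantile y q t \<le> y i"
  unfolding step_quantile_def
  using block_index_le[of t q i] block_index_bounds[OF q, of t] assms by (intro Xi_le[OF y]) auto

lemma step_quantile_ge:
  assumes y: "Xi n y" and q: "Pi_n n q" and t: "t \<in> {0<..<1}" and "Psum q i \<le> t" "Suc i \<le> n"
  shows "y (Suc i) \<le> step_quantile y q t"
  unfolding step_quantile_def
  using block_index_gt[OF q, of t i] block_index_bounds[OF q, of t] assms by (intro Xi_le[OF y]) auto

lemma step_quantile_eq_on_run:
  assumes q: "Pi_n n q" and t: "t \<in> {0<..<1}" and ab: "1 \<le> a" "a \<le> b" "b \<le> n"
    and "Psum q (a - 1) \<le> t" "t < Psum q b" and run: "\<And>l. a \<le> l \<Longrightarrow> l \<le> b \<Longrightarrow> y l = v"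
  shows "step_quantile y q t = v"
proof -
  have "a - 1 < block_index q t" by (rule block_index_gt[OF q]) (use assms in auto)
  then show ?thesis unfolding step_quantile_def using block_index_le[of t q b] assms by (intro run) auto
qed

lemma step_quantile_in_image:
  assumes q: "Pi_n n q" and t: "t \<in> {0<..<1}"
    and outside: "\<not> (Psum q (i - 1) \<le> t \<and> t < Psum q i)"
  shows "step_quantile y q t \<in> y ` ({1..n} - {i})"
proof -
  have "block_index q t \<noteq> i" using block_index_bounds[OF q, of t] t outside by auto
  then show ?thesis unfolding step_quantile_def using block_index_bounds[OF q, of t] t by auto
qed

lemma mono_on_step_quantile:
  assumes y: "Xi n y" and q: "Pi_n n q"
  shows "mono_on {0<..<1} (step_quantile y q)"
proof (rule mono_onI)
  fix t t' :: real assume "t \<in> {0<..<1}" "t' \<in> {0<..<1}" "t \<le> t'"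
  then show "step_quantile y q t \<le> step_quantile y q t'"
    unfolding step_quantile_def using block_index_bounds[OF q, of t] block_index_bounds[OF q, of t']
      block_index_le[of t q "block_index q t'"] by (intro Xi_le[OF y]) auto
qed

lemma quantile_discr:
  assumes y: "Xi n y" and q: "Pi_n n q" and t: "0 < t" "t < 1"
  shows "quantile (discr n y q) t = step_quantile y q t"
proof -
  let ?l = "block_index q t"
  note l = block_index_bounds[OF q, of t]
  have nonneg: "\<And>i. i \<in> {1..n} \<Longrightarrow> 0 \<le> q i" using q unfolding Pi_n_def by auto
  have "{z. cdf (discr n y q) z \<le> t} = {..<y ?l}"
  proof (intro set_eqI iffI)
    fix z assume "z \<in> {z. cdf (discr n y q) z \<le> t}"
    then have le: "(\<Sum>i\<in>{i\<in>{1..n}. y i \<le> z}. q i) \<le> t" by (simp add: cdf_discr[OF q])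
    show "z \<in> {..<y ?l}"
    proof (rule ccontr)
      assume "z \<notin> {..<y ?l}"
      then have "{1..?l} \<subseteq> {i\<in>{1..n}. y i \<le> z}"
        using l t Xi_le[OF y, of _ ?l] by force
      then have "Psum q ?l \<le> (\<Sum>i\<in>{i\<in>{1..n}. y i \<le> z}. q i)"
        unfolding Psum_def by (intro sum_mono2) (auto intro: nonneg)
      then show False using le l t by simp
    qed
  next
    fix z assume z: "z \<in> {..<y ?l}"
    have "{i\<in>{1..n}. y i \<le> z} \<subseteq> {1..?l - 1}"
    proof
      fix i assume i: "i \<in> {i\<in>{1..n}. y i \<le> z}"
      have "\<not> ?l \<le> i"
      proof
        assume "?l \<le> i"
        then have "y ?l \<le> y i" using Xi_le[OF y, of ?l i] l t i by auto
        then show False using i z by auto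
      qed
      then show "i \<in> {1..?l - 1}" using i by auto
    qed
    then have "(\<Sum>i\<in>{i\<in>{1..n}. y i \<le> z}. q i) \<le> Psum q (?l - 1)"
      unfolding Psum_def by (intro sum_mono2) (use l t in \<open>auto intro!: nonneg\<close>)
    then show "z \<in> {z. cdf (discr n y q) z \<le> t}"
      using l t by (simp add: cdf_discr[OF q])
  qed
  then show ?thesis unfolding quantile_def step_quantile_def by simp
qed

lemma Sup_level_set_le:
  fixes G :: "real \<Rightarrow> real"
  assumes mono: "mono_on {0<..<1} G" and t: "t \<in> {0<..<1}" and v: "v < G t"
    and ne: "{s\<in>{0<..<1}. G s \<le> v} \<noteq> {}"
  shows "Sup {s\<in>{0<..<1}. G s \<le> v} \<le> t"
proof (rule cSup_least[OF ne])
  fix s assume s: "s \<in> {s\<in>{0<..<1}. G s \<le> v}"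
  show "s \<le> t"
  proof (rule ccontr)
    assume "\<not> s \<le> t"
    then have "G t \<le> G s" using s t by (intro mono_onD[OF mono]) auto
    then show False using s v by simp
  qed
qed

lemma step_quantile_eq_of_level_sets:
  fixes G :: "real \<Rightarrow> real"
  assumes q: "Pi_n n q" and mono: "mono_on {0<..<1} G"
    and level: "\<And>l. 1 \<le> l \<Longrightarrow> l \<le> n \<Longrightarrow> Psum q l = Sup {s\<in>{0<..<1}. G s \<le> y l}"
    and y_in: "\<And>l. y l \<in> G ` {0<..<1}"
    and t: "t \<in> {0<..<1}" "t \<notin> Psum q ` {0..n}"
    and k: "1 \<le> k" "k \<le> n" "y k = G t" and prev: "1 < k \<Longrightarrow> y (k - 1) < G t"
  shows "step_quantile y q t = G t"
proof -
  have ne: "{s\<in>{0<..<1}. G s \<le> y l} \<noteq> {}" for l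
    using y_in[of l] by (metis (mono_tags, lifting) empty_iff imageE mem_Collect_eq order.refl)
  have "t \<le> Psum q k"
    unfolding level[OF k(1,2)] using t k(3) by (intro cSup_upper bdd_aboveI[where M=1]) auto
  moreover have "t \<noteq> Psum q k" using t(2) k by force
  ultimately have upper: "t < Psum q k" by simp
  have "Psum q (k - 1) \<le> t"
  proof (cases "k = 1")
    case False
    then have "Psum q (k - 1) = Sup {s\<in>{0<..<1}. G s \<le> y (k - 1)}" using k by (intro level) auto
    also have "\<dots> \<le> t" using False k(1) by (intro Sup_level_set_le[OF mono t(1) prev ne]) auto
    finally show ?thesis .
  qed (use t in simp)
  then have "block_index q t = k" using t k upper by (intro block_index_eqI[OF q]) auto
  then show ?thesis unfolding step_quantile_def using k(3) by simp
qed

lemma step_quantile_representation: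
  fixes G :: "real \<Rightarrow> real"
  assumes mono: "mono_on {0<..<1} G" and fin: "finite (G ` {0<..<1})"
    and card: "card (G ` {0<..<1}) \<le> n"
  shows "\<exists>y q. Xi n y \<and> Pi_n n q \<and>
           (\<forall>t\<in>{0<..<1}. t \<notin> Psum q ` {0..n} \<longrightarrow> step_quantile y q t = G t)"
proof -
  define V where "V = G ` {0<..<1}"
  define m where "m = card V"
  define vs where "vs = sorted_list_of_set V"
  have m: "1 \<le> m" "m \<le> n" using fin card unfolding m_def V_def by (auto simp: Suc_le_eq card_gt_0_iff)
  have vs: "length vs = m" "set vs = V" "sorted_wrt (<) vs" "sorted vs"
    using fin unfolding vs_def m_def V_def by auto
  define y where "y k = vs ! (min (k - 1) (m - 1))" for k
  define A where "A k = {t\<in>{0<..<1}. G t \<le> y k}" for k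
  define Q where "Q k = (if k = 0 then 0 else Sup (A k))" for k
  have y_mono: "y k \<le> y k'" if "k \<le> k'" for k k'
    unfolding y_def using that vs m by (intro sorted_nth_mono) auto
  have "min (k - 1) (m - 1) < m" for k using m by linarith
  then have y_V: "y k \<in> V" for k unfolding y_def using vs by (metis nth_mem)
  then have A_ne: "A k \<noteq> {}" for k
    unfolding A_def V_def by (metis (mono_tags, lifting) empty_iff imageE mem_Collect_eq order.refl)
  have A_bdd: "bdd_above (A k)" for k by (rule bdd_aboveI[where M=1]) (auto simp: A_def)
  have Q_pos: "0 < Q k" if "1 \<le> k" for k
  proof -
    obtain t where t: "t \<in> A k" using A_ne by blast
    then have "t \<le> Sup (A k)" by (rule cSup_upper[OF _ A_bdd])
    then show ?thesis using t that unfolding A_def Q_def by auto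
  qed
  have Q_mono: "Q k \<le> Q k'" if "k \<le> k'" for k k'
  proof (cases "k = 0")
    case False
    have "A k \<subseteq> A k'" unfolding A_def using y_mono[OF that] by auto
    then show ?thesis using False that unfolding Q_def by (auto intro!: cSup_subset_mono A_ne A_bdd)
  next
    case True
    then show ?thesis using Q_pos[of k'] by (cases "k' = 0") (auto simp: Q_def)
  qed
  have Q_top: "Q n = 1"
  proof -
    have "G t \<le> y n" if "t \<in> {0<..<1}" for t
    proof -
      have "G t \<in> set vs" using that vs unfolding V_def by auto
      then obtain j where "j < m" "vs ! j = G t" using vs by (auto simp: in_set_conv_nth)
      moreover have "y n = vs ! (m - 1)" unfolding y_def using m by simp
      ultimately show ?thesis using sorted_nth_mono[OF vs(4), of j "m - 1"] vs by auto
    qed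
    then have "A n = {0<..<1}" unfolding A_def by auto
    then show ?thesis unfolding Q_def using m by simp
  qed
  define q where "q k = Q k - Q (k - 1)" for k
  have "Q 0 = 0" by (simp add: Q_def)
  then have q: "Pi_n n q" and Psum_q: "\<And>k. Psum q k = Q k"
    using Pi_n_increments[of Q n, OF _ Q_top Q_mono] unfolding q_def by auto
  have "step_quantile y q t = G t" if t: "t \<in> {0<..<1}" "t \<notin> Psum q ` {0..n}" for t
  proof -
    have "G t \<in> set vs" using t vs unfolding V_def by auto
    then obtain j where j: "j < m" "vs ! j = G t" using vs by (auto simp: in_set_conv_nth)
    show ?thesis
    proof (rule step_quantile_eq_of_level_sets[where k = "Suc j", OF q mono _ _ t])
      show "Psum q l = Sup {s\<in>{0<..<1}. G s \<le> y l}" if "1 \<le> l" "l \<le> n" for l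
        using that unfolding Psum_q Q_def A_def by simp
      show "y l \<in> G ` {0<..<1}" for l using y_V unfolding V_def .
      show "y (Suc j - 1) < G t" if "1 < Suc j"
      proof -
        have "y (Suc j - 1) = vs ! (j - 1)" unfolding y_def using j by (simp add: min_def)
        also have "\<dots> < vs ! j" using j that vs by (intro sorted_wrt_nth_less[OF vs(3)]) auto
        finally show ?thesis using j by simp
      qed
    qed (use j m in \<open>auto simp: y_def\<close>)
  qed
  moreover have "Xi n y" unfolding Xi_def using y_mono by auto
  ultimately show ?thesis using q by blast
qed

section \<open>Convexity of the power function\<close>

lemma powr_above_tangent_strict:
  fixes r m u :: real
  assumes r: "r > 1" and m: "m > 0" and u: "u \<ge> 0" and um: "u \<noteq> m"
  shows "m powr r + r * m powr (r - 1) * (u - m) < u powr r"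
proof (cases "u = 0")
  case True
  have "0 < (r - 1) * m powr r" using r m by simp
  then show ?thesis using True m by (simp add: powr_mult_base algebra_simps)
next
  case False
  then have u0: "u > 0" using u by simp
  have D: "\<And>z. z > 0 \<Longrightarrow> ((\<lambda>z. z powr r) has_real_derivative r * z powr (r - 1)) (at z)"
    by (rule has_real_derivative_powr)
  consider "m < u" | "u < m" using um by linarith
  then show ?thesis
  proof cases
    case 1
    obtain z where z: "m < z" "z < u" "u powr r - m powr r = (u - m) * (r * z powr (r - 1))"
      using MVT2[OF 1, of "\<lambda>z. z powr r" "\<lambda>z. r * z powr (r - 1)"] D m by force
    have "m powr (r - 1) < z powr (r - 1)"
      using z m r by (intro powr_less_mono2) auto
    then have "(u - m) * (r * m powr (r - 1)) < (u - m) * (r * z powr (r - 1))"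
      using 1 r by (intro mult_strict_left_mono) auto
    then show ?thesis using z by (simp add: algebra_simps)
  next
    case 2
    obtain z where z: "u < z" "z < m" "m powr r - u powr r = (m - u) * (r * z powr (r - 1))"
      using MVT2[OF 2, of "\<lambda>z. z powr r" "\<lambda>z. r * z powr (r - 1)"] D u0 by force
    have "z powr (r - 1) < m powr (r - 1)"
      using z u0 r by (intro powr_less_mono2) auto
    then have "(m - u) * (r * z powr (r - 1)) < (m - u) * (r * m powr (r - 1))"
      using 2 r by (intro mult_strict_left_mono) auto
    then show ?thesis using z by (simp add: algebra_simps)
  qed
qed

lemma powr_above_tangent:
  fixes r m u :: real
  assumes r: "r \<ge> 1" and m: "m > 0" and u: "u \<ge> 0"
  shows "m powr r + r * m powr (r - 1) * (u - m) \<le> u powr r"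
proof (cases "r = 1 \<or> u = m")
  case True
  then show ?thesis using u m by (auto simp: powr_mult_base)
next
  case False
  then show ?thesis using powr_above_tangent_strict[OF _ m u] r by (auto intro: less_imp_le)
qed

lemma convex_abs_powr:
  fixes r a b l :: real
  assumes r: "r \<ge> 1" and l: "0 \<le> l" "l \<le> 1"
  shows "\<bar>l * a + (1 - l) * b\<bar> powr r \<le> l * \<bar>a\<bar> powr r + (1 - l) * \<bar>b\<bar> powr r"
proof -
  define m where "m = l * \<bar>a\<bar> + (1 - l) * \<bar>b\<bar>"
  have "\<bar>l * a + (1 - l) * b\<bar> \<le> m"
    unfolding m_def using l by (metis abs_mult abs_of_nonneg abs_triangle_ineq diff_ge_0_iff_ge)
  then have le: "\<bar>l * a + (1 - l) * b\<bar> powr r \<le> m powr r" using r by (intro powr_mono2) auto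
  show ?thesis
  proof (cases "m = 0")
    case True
    then show ?thesis using le l by (auto intro: add_nonneg_nonneg)
  next
    case False
    then have m: "m > 0" unfolding m_def using l by (smt (verit) mult_nonneg_nonneg abs_ge_zero)
    have "l * (m powr r + r * m powr (r - 1) * (\<bar>a\<bar> - m))
        + (1 - l) * (m powr r + r * m powr (r - 1) * (\<bar>b\<bar> - m))
        \<le> l * \<bar>a\<bar> powr r + (1 - l) * \<bar>b\<bar> powr r"
      using powr_above_tangent[OF r m] l by (intro add_mono mult_left_mono) auto
    moreover have "l * (m powr r + r * m powr (r - 1) * (\<bar>a\<bar> - m))
        + (1 - l) * (m powr r + r * m powr (r - 1) * (\<bar>b\<bar> - m)) = m powr r"
      unfolding m_def by (simp add: algebra_simps)
    ultimately show ?thesis using le by simp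
  qed
qed

lemma abs_powr_midpoint_less:
  fixes r a b :: real
  assumes r: "r > 1" and ab: "a \<noteq> b"
  shows "\<bar>(a + b) / 2\<bar> powr r < (\<bar>a\<bar> powr r + \<bar>b\<bar> powr r) / 2"
proof (cases "\<bar>a\<bar> = \<bar>b\<bar>")
  case True
  then have "b = - a" "a \<noteq> 0" using ab by (auto simp: abs_eq_iff)
  then show ?thesis using r by simp
next
  case False
  define m where "m = (\<bar>a\<bar> + \<bar>b\<bar>) / 2"
  have m: "m > 0" unfolding m_def using False by auto
  have "\<bar>(a + b) / 2\<bar> \<le> m" unfolding m_def by simp
  then have le: "\<bar>(a + b) / 2\<bar> powr r \<le> m powr r" using r by (intro powr_mono2) auto
  have "\<bar>a\<bar> \<noteq> m" using False unfolding m_def by auto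
  then have "m powr r + r * m powr (r - 1) * (\<bar>a\<bar> - m) < \<bar>a\<bar> powr r"
    by (rule powr_above_tangent_strict[OF r m abs_ge_zero])
  moreover have "m powr r + r * m powr (r - 1) * (\<bar>b\<bar> - m) \<le> \<bar>b\<bar> powr r"
    using r by (intro powr_above_tangent[OF _ m abs_ge_zero]) simp
  ultimately have "2 * m powr r + r * m powr (r - 1) * (\<bar>a\<bar> - m) + r * m powr (r - 1) * (\<bar>b\<bar> - m)
      < \<bar>a\<bar> powr r + \<bar>b\<bar> powr r"
    by linarith
  moreover have "r * m powr (r - 1) * (\<bar>a\<bar> - m) + r * m powr (r - 1) * (\<bar>b\<bar> - m) = 0"
    unfolding m_def by (simp add: algebra_simps)
  ultimately show ?thesis using le by simp
qed

lemma abs_powr_exchange: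
  fixes r a b c d :: real
  assumes r: "r \<ge> 1" and "a \<le> b" "b \<le> d" "a \<le> c" "c \<le> d" "a + d = b + c"
  shows "\<bar>b\<bar> powr r + \<bar>c\<bar> powr r \<le> \<bar>a\<bar> powr r + \<bar>d\<bar> powr r"
proof (cases "a = d")
  case False
  then have ad: "a < d" using assms by simp
  define l where "l = (d - b) / (d - a)"
  have l: "0 \<le> l" "l \<le> 1" unfolding l_def using assms ad by (auto simp: divide_simps)
  have e: "l * (d - a) = d - b" unfolding l_def using ad by simp
  have b: "b = l * a + (1 - l) * d" using e by (simp add: algebra_simps)
  have c: "c = (1 - l) * a + (1 - (1 - l)) * d" using e assms(6) by (simp add: algebra_simps)
  have "\<bar>b\<bar> powr r \<le> l * \<bar>a\<bar> powr r + (1 - l) * \<bar>d\<bar> powr r"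
    unfolding b by (rule convex_abs_powr[OF r l])
  moreover have "\<bar>c\<bar> powr r \<le> (1 - l) * \<bar>a\<bar> powr r + (1 - (1 - l)) * \<bar>d\<bar> powr r"
    unfolding c by (rule convex_abs_powr[OF r]) (use l in auto)
  ultimately show ?thesis by (simp add: algebra_simps)
qed (use assms in simp)

lemma powr_inverse_le_iff:
  fixes a b r :: real
  assumes "0 \<le> a" "0 \<le> b" "r > 0"
  shows "a powr (1 / r) \<le> b powr (1 / r) \<longleftrightarrow> a \<le> b"
  using assms powr_mono2[of "1 / r" a b] powr_less_mono2[of "1 / r" b a] by force

section \<open>The cost of a monotone function\<close>

locale quantile_cost =
  fixes r :: real and M :: "real measure"
  assumes r: "r \<ge> 1" and M: "in_Pr r M"
begin

lemma real_distribution_M: "real_distribution M"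
  using M unfolding in_Pr_def by simp

abbreviation f :: "real \<Rightarrow> real" where
  "f \<equiv> quantile M"

definition cost :: "(real \<Rightarrow> real) \<Rightarrow> real" where
  "cost G = integral\<^sup>L unit_lborel (\<lambda>t. \<bar>G t - f t\<bar> powr r)"

definition block_cost :: "real \<Rightarrow> real \<Rightarrow> real \<Rightarrow> real" where
  "block_cost a b c = integral\<^sup>L unit_lborel (\<lambda>t. indicator {a<..<b} t * \<bar>c - f t\<bar> powr r)"

lemma borel_measurable_f: "f \<in> borel_measurable unit_lborel"
  by (rule borel_measurable_unit_lborel_of_mono[OF mono_on_quantile[OF real_distribution_M]])

lemma integrable_abs_f_powr: "integrable unit_lborel (\<lambda>t. \<bar>f t\<bar> powr r)"
proof -
  have "integrable M (\<lambda>x. \<bar>x\<bar> powr r)" using M unfolding in_Pr_def by simp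
  then have "integrable (distr unit_lborel borel f) (\<lambda>x. \<bar>x\<bar> powr r)"
    using distr_quantile[OF real_distribution_M] by simp
  then show ?thesis by (subst (asm) integrable_distr_eq[OF borel_measurable_f]) auto
qed

lemma integrable_cost_of_bounded:
  assumes G: "G \<in> borel_measurable unit_lborel" and B: "\<And>t. t \<in> {0<..<1} \<Longrightarrow> \<bar>G t\<bar> \<le> B"
  shows "integrable unit_lborel (\<lambda>t. \<bar>G t - f t\<bar> powr r)"
proof (rule Bochner_Integration.integrable_bound)
  interpret prob_space unit_lborel by (rule prob_space_unit_lborel)
  show "integrable unit_lborel (\<lambda>t. 2 powr r * (\<bar>B\<bar> powr r + \<bar>f t\<bar> powr r))"
    using integrable_abs_f_powr by auto
  show "(\<lambda>t. \<bar>G t - f t\<bar> powr r) \<in> borel_measurable unit_lborel"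
    using G borel_measurable_f by measurable
  show "AE t in unit_lborel. norm (\<bar>G t - f t\<bar> powr r) \<le> norm (2 powr r * (\<bar>B\<bar> powr r + \<bar>f t\<bar> powr r))"
  proof (rule AE_I2)
    fix t assume t: "t \<in> space unit_lborel"
    have "\<bar>G t - f t\<bar> \<le> 2 * max \<bar>B\<bar> \<bar>f t\<bar>" using B[of t] t by auto
    then have "\<bar>G t - f t\<bar> powr r \<le> (2 * max \<bar>B\<bar> \<bar>f t\<bar>) powr r"
      using r by (intro powr_mono2) auto
    also have "\<dots> = 2 powr r * max \<bar>B\<bar> \<bar>f t\<bar> powr r" by (simp add: powr_mult)
    also have "\<dots> \<le> 2 powr r * (\<bar>B\<bar> powr r + \<bar>f t\<bar> powr r)" by (simp add: max_def)
    finally show "norm (\<bar>G t - f t\<bar> powr r) \<le> norm (2 powr r * (\<bar>B\<bar> powr r + \<bar>f t\<bar> powr r))"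
      by simp
  qed
qed

lemma integrable_cost:
  assumes "mono_on {0<..<1} G" "finite (G ` {0<..<1})"
  shows "integrable unit_lborel (\<lambda>t. \<bar>G t - f t\<bar> powr r)"
proof (rule integrable_cost_of_bounded)
  show "G \<in> borel_measurable unit_lborel" by (rule borel_measurable_unit_lborel_of_mono[OF assms(1)])
  show "\<bar>G t\<bar> \<le> (\<Sum>v\<in>G ` {0<..<1}. \<bar>v\<bar>)" if "t \<in> {0<..<1}" for t
    using assms(2) that by (intro member_le_sum[where f=abs]) auto
qed

lemma cost_nonneg: "0 \<le> cost G"
  unfolding cost_def by (rule integral_nonneg_AE) simp

lemma d_r_discr_eq_cost:
  assumes "Xi n y" "Pi_n n q"
  shows "d_r r (discr n y q) M = cost (step_quantile y q) powr (1 / r)"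
proof -
  have "integral\<^sup>L unit_lborel (\<lambda>t. \<bar>quantile (discr n y q) t - f t\<bar> powr r)
      = cost (step_quantile y q)"
    unfolding cost_def by (rule Bochner_Integration.integral_cong) (auto simp: quantile_discr[OF assms])
  then show ?thesis unfolding d_r_def set_integral_eq_unit_lborel by simp
qed

lemma integrable_const_cost: "integrable unit_lborel (\<lambda>t. \<bar>c - f t\<bar> powr r)"
  by (rule integrable_cost_of_bounded[where B="\<bar>c\<bar>"]) auto

lemma integrable_block:
  "integrable unit_lborel (\<lambda>t. indicator {a<..<b} t * \<bar>c - f t\<bar> powr r)"
  by (intro integrable_indicator_mult_unit_lborel integrable_const_cost) auto

lemma block_cost_diff:
  "block_cost a b w - block_cost a b c
    = integral\<^sup>L unit_lborel (\<lambda>t. indicator {a<..<b} t * (\<bar>w - f t\<bar> powr r - \<bar>c - f t\<bar> powr r))"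
  unfolding block_cost_def using integrable_block by (simp add: right_diff_distrib)

lemma cost_update_const:
  assumes G: "integrable unit_lborel (\<lambda>t. \<bar>G t - f t\<bar> powr r)"
    and const: "\<And>t. t \<in> {0<..<1} \<Longrightarrow> u \<le> t \<Longrightarrow> t < v \<Longrightarrow> G t = c"
  shows "cost (\<lambda>t. if u \<le> t \<and> t < v then w else G t)
    = cost G + (block_cost u v w - block_cost u v c)"
proof -
  define h where "h S t = indicator S t * (\<bar>w - f t\<bar> powr r - \<bar>c - f t\<bar> powr r)" for S t
  have h_int: "integrable unit_lborel (h {u..<v})"
    unfolding h_def
    by (intro integrable_indicator_mult_unit_lborel Bochner_Integration.integrable_diff integrable_const_cost) auto
  have "cost (\<lambda>t. if u \<le> t \<and> t < v then w else G t)
      = integral\<^sup>L unit_lborel (\<lambda>t. \<bar>G t - f t\<bar> powr r + h {u..<v} t)"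
    unfolding cost_def by (rule Bochner_Integration.integral_cong) (auto simp: const h_def)
  also have "\<dots> = cost G + integral\<^sup>L unit_lborel (h {u..<v})"
    unfolding cost_def using G h_int by simp
  also have "integral\<^sup>L unit_lborel (h {u..<v}) = integral\<^sup>L unit_lborel (h {u<..<v})"
  proof (rule integral_cong_AE)
    have "h S \<in> borel_measurable unit_lborel" if "S \<in> sets borel" for S
      unfolding h_def using borel_measurable_indicator_unit_lborel[OF that] borel_measurable_f
      by measurable
    then show "h {u..<v} \<in> borel_measurable unit_lborel" "h {u<..<v} \<in> borel_measurable unit_lborel"
      by auto
    show "AE t in unit_lborel. h {u..<v} t = h {u<..<v} t"
      using AE_unit_lborel_not_in[of "{u}"] by (rule AE_mp) (auto intro!: AE_I2 simp: h_def indicator_def)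
  qed
  finally show ?thesis by (simp add: block_cost_diff h_def[abs_def])
qed

lemma block_cost_split:
  assumes "a \<le> b" "b \<le> d"
  shows "block_cost a d c = block_cost a b c + block_cost b d c"
proof -
  let ?g = "\<lambda>S t. indicator S t * \<bar>c - f t\<bar> powr r"
  have "block_cost a d c = integral\<^sup>L unit_lborel (\<lambda>t. ?g {a<..<b} t + ?g {b<..<d} t)"
    unfolding block_cost_def
  proof (rule integral_cong_AE)
    show "AE t in unit_lborel. ?g {a<..<d} t = ?g {a<..<b} t + ?g {b<..<d} t"
      using AE_unit_lborel_not_in[of "{b}"] by (rule AE_mp) (use assms in \<open>auto simp: indicator_def\<close>)
  qed (use borel_measurable_integrable[OF integrable_block] in auto)
  then show ?thesis unfolding block_cost_def using integrable_block by simp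
qed

lemma block_cost_mono_pointwise:
  assumes "\<And>t. t \<in> {0<..<1} \<Longrightarrow> a < t \<Longrightarrow> t < b \<Longrightarrow> \<bar>w - f t\<bar> powr r \<le> \<bar>c - f t\<bar> powr r"
  shows "block_cost a b w \<le> block_cost a b c"
  unfolding block_cost_def
  by (intro integral_mono_AE integrable_block AE_I2) (use assms in \<open>auto simp: indicator_def\<close>)

lemma block_cost_less_imp_ex:
  assumes "block_cost a b w < block_cost a b c"
  obtains t where "t \<in> {0<..<1}" "a < t" "t < b" "\<bar>w - f t\<bar> powr r < \<bar>c - f t\<bar> powr r"
proof (rule ccontr)
  assume no: "\<not> thesis"
  have "block_cost a b c \<le> block_cost a b w"
  proof (rule block_cost_mono_pointwise)
    fix t assume t: "t \<in> {0<..<1}" "a < t" "t < b"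
    show "\<bar>c - f t\<bar> powr r \<le> \<bar>w - f t\<bar> powr r"
      using no that[OF t] by (metis not_le)
  qed
  then show False using assms by simp
qed

text \<open>For \<open>c < w\<close> the difference \<open>\<bar>w - f t\<bar>\<^sup>r - \<bar>c - f t\<bar>\<^sup>r\<close> is antitone in \<open>t\<close>, by
  \<open>abs_powr_exchange\<close>; so a move that pays off on one block cannot hurt on later ones.\<close>

lemma block_cost_right_le_of_less_up:
  assumes cw: "c < w" and "b \<le> d" and less: "block_cost a b w < block_cost a b c"
  shows "block_cost b d w \<le> block_cost b d c"
proof (rule block_cost_mono_pointwise)
  obtain t0 where t0: "t0 \<in> {0<..<1}" "t0 < b" "\<bar>w - f t0\<bar> powr r < \<bar>c - f t0\<bar> powr r"
    using block_cost_less_imp_ex[OF less] by blast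
  fix t assume t: "t \<in> {0<..<1}" "b < t"
  have "f t0 \<le> f t" using t t0 by (intro quantile_mono[OF real_distribution_M]) auto
  then have "\<bar>w - f t\<bar> powr r + \<bar>c - f t0\<bar> powr r \<le> \<bar>c - f t\<bar> powr r + \<bar>w - f t0\<bar> powr r"
    using cw by (intro abs_powr_exchange[OF r]) auto
  then show "\<bar>w - f t\<bar> powr r \<le> \<bar>c - f t\<bar> powr r" using t0 by linarith
qed

lemma block_cost_left_le_of_less_down:
  assumes wc: "w < c" and "a \<le> b" and less: "block_cost b d w < block_cost b d c"
  shows "block_cost a b w \<le> block_cost a b c"
proof (rule block_cost_mono_pointwise)
  obtain t0 where t0: "t0 \<in> {0<..<1}" "b < t0" "\<bar>w - f t0\<bar> powr r < \<bar>c - f t0\<bar> powr r"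
    using block_cost_less_imp_ex[OF less] by blast
  fix t assume t: "t \<in> {0<..<1}" "t < b"
  have "f t \<le> f t0" using t t0 by (intro quantile_mono[OF real_distribution_M]) auto
  then have "\<bar>w - f t\<bar> powr r + \<bar>c - f t0\<bar> powr r \<le> \<bar>w - f t0\<bar> powr r + \<bar>c - f t\<bar> powr r"
    using wc by (intro abs_powr_exchange[OF r]) auto
  then show "\<bar>w - f t\<bar> powr r \<le> \<bar>c - f t\<bar> powr r" using t0 by linarith
qed

lemma block_cost_convex:
  assumes l: "0 \<le> l" "l \<le> 1"
  shows "block_cost a b (l * u + (1 - l) * v) \<le> l * block_cost a b u + (1 - l) * block_cost a b v"
proof -
  have "block_cost a b (l * u + (1 - l) * v)
      \<le> integral\<^sup>L unit_lborel (\<lambda>t. l * (indicator {a<..<b} t * \<bar>u - f t\<bar> powr r)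
                          + (1 - l) * (indicator {a<..<b} t * \<bar>v - f t\<bar> powr r))"
    unfolding block_cost_def
  proof (intro integral_mono_AE integrable_block AE_I2 Bochner_Integration.integrable_add integrable_mult_right)
    fix t
    have "\<bar>l * (u - f t) + (1 - l) * (v - f t)\<bar> powr r \<le> l * \<bar>u - f t\<bar> powr r + (1 - l) * \<bar>v - f t\<bar> powr r"
      by (rule convex_abs_powr[OF r l])
    moreover have "l * (u - f t) + (1 - l) * (v - f t) = l * u + (1 - l) * v - f t"
      by (simp add: algebra_simps)
    ultimately show "indicator {a<..<b} t * \<bar>l * u + (1 - l) * v - f t\<bar> powr r
        \<le> l * (indicator {a<..<b} t * \<bar>u - f t\<bar> powr r) + (1 - l) * (indicator {a<..<b} t * \<bar>v - f t\<bar> powr r)"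
      by (auto simp: indicator_def)
  qed
  also have "\<dots> = l * block_cost a b u + (1 - l) * block_cost a b v"
    unfolding block_cost_def using integrable_block by simp
  finally show ?thesis .
qed

lemma block_cost_less_between:
  assumes less: "block_cost a b s < block_cost a b c"
    and w: "c < w \<and> w \<le> s \<or> s \<le> w \<and> w < c"
  shows "block_cost a b w < block_cost a b c"
proof -
  define l where "l = (s - w) / (s - c)"
  have l: "0 \<le> l" "l < 1" unfolding l_def using w by (auto simp: divide_simps)
  have "w = l * c + (1 - l) * s" unfolding l_def using w by (auto simp: field_simps)
  then have "block_cost a b w \<le> l * block_cost a b c + (1 - l) * block_cost a b s"
    using block_cost_convex[of l a b c s] l by simp
  also have "\<dots> < block_cost a b c"
    using mult_strict_left_mono[OF less, of "1 - l"] l by (simp add: algebra_simps)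
  finally show ?thesis .
qed

lemma block_cost_midpoint_less:
  assumes r1: "r > 1" and ab: "0 \<le> a" "a < b" "b \<le> 1" and uv: "u \<noteq> v"
  shows "block_cost a b ((u + v) / 2) < (block_cost a b u + block_cost a b v) / 2"
proof -
  interpret prob_space unit_lborel by (rule prob_space_unit_lborel)
  let ?g = "\<lambda>c t. indicator {a<..<b} t * \<bar>c - f t\<bar> powr r"
  have strict: "\<bar>(u + v) / 2 - f t\<bar> powr r < (\<bar>u - f t\<bar> powr r + \<bar>v - f t\<bar> powr r) / 2" for t
    using abs_powr_midpoint_less[OF r1, of "u - f t" "v - f t"] uv by (simp add: field_simps)
  have "block_cost a b ((u + v) / 2) < integral\<^sup>L unit_lborel (\<lambda>t. (?g u t + ?g v t) / 2)"
    unfolding block_cost_def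
  proof (rule integral_less_AE[where A="{a<..<b}"])
    show "integrable unit_lborel (\<lambda>t. (?g u t + ?g v t) / 2)" using integrable_block by auto
    show "emeasure unit_lborel {a<..<b} \<noteq> 0" using ab by (subst emeasure_unit_lborel) auto
    show "{a<..<b} \<in> sets unit_lborel" using ab by (auto simp: sets_unit_lborel_iff)
    show "AE t in unit_lborel. t \<in> {a<..<b} \<longrightarrow> ?g ((u + v) / 2) t \<noteq> (?g u t + ?g v t) / 2"
      using strict by (auto intro!: AE_I2 dest: less_imp_neq)
    show "AE t in unit_lborel. ?g ((u + v) / 2) t \<le> (?g u t + ?g v t) / 2"
      using strict by (auto intro!: AE_I2 less_imp_le simp: indicator_def)
  qed (rule integrable_block)
  also have "\<dots> = (block_cost a b u + block_cost a b v) / 2"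
    unfolding block_cost_def using integrable_block by simp
  finally show ?thesis .
qed

lemma block_cost_diff_le_r1:
  assumes r1: "r = 1" and uv: "0 \<le> a" "a \<le> u" "u \<le> v" "v \<le> b" "b \<le> 1"
    and J: "{u<..<v} \<subseteq> J" "J \<subseteq> {u..v}" "J \<subseteq> {a<..<b}" "J \<in> sets borel"
    and far: "\<And>t. t \<in> J \<Longrightarrow> t \<in> {0<..<1} \<Longrightarrow> \<bar>w - f t\<bar> - \<bar>c - f t\<bar> = - \<bar>w - c\<bar>"
  shows "block_cost a b w - block_cost a b c \<le> \<bar>w - c\<bar> * ((b - a) - 2 * (v - u))"
proof -
  interpret prob_space unit_lborel by (rule prob_space_unit_lborel)
  let ?e = "\<bar>w - c\<bar>"
  have int_const: "integrable unit_lborel (\<lambda>t. indicator S t * e)" if "S \<in> sets borel" for S and e :: real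
    by (rule integrable_indicator_mult_unit_lborel[OF _ that]) simp
  have "block_cost a b w - block_cost a b c
      = integral\<^sup>L unit_lborel (\<lambda>t. indicator {a<..<b} t * (\<bar>w - f t\<bar> powr r - \<bar>c - f t\<bar> powr r))"
    by (rule block_cost_diff)
  also have "\<dots> = integral\<^sup>L unit_lborel (\<lambda>t. indicator {a<..<b} t * (\<bar>w - f t\<bar> - \<bar>c - f t\<bar>))"
    using r1 by simp
  also have "\<dots> \<le> integral\<^sup>L unit_lborel (\<lambda>t. indicator {a<..<b} t * ?e + indicator J t * (- 2 * ?e))"
  proof (rule integral_mono_AE)
    show "integrable unit_lborel (\<lambda>t. indicator {a<..<b} t * (\<bar>w - f t\<bar> - \<bar>c - f t\<bar>))"
      using integrable_const_cost[of w] integrable_const_cost[of c] r1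
      by (intro integrable_indicator_mult_unit_lborel Bochner_Integration.integrable_diff) auto
    show "integrable unit_lborel (\<lambda>t. indicator {a<..<b} t * ?e + indicator J t * (- 2 * ?e))"
      using J(4) by (intro Bochner_Integration.integrable_add int_const) auto
    have "\<bar>w - f t\<bar> - \<bar>c - f t\<bar> \<le> ?e" for t by linarith
    then show "AE t in unit_lborel. indicator {a<..<b} t * (\<bar>w - f t\<bar> - \<bar>c - f t\<bar>)
        \<le> indicator {a<..<b} t * ?e + indicator J t * (- 2 * ?e)"
      using J(3) far by (intro AE_I2) (auto simp: indicator_def subset_iff)
  qed
  also have "\<dots> = ?e * (b - a) + (- 2 * ?e) * (v - u)"
  proof -
    have i1: "integral\<^sup>L unit_lborel (\<lambda>t. indicator {a<..<b} t * ?e) = ?e * (b - a)"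
      by (rule integral_indicator_interval_unit_lborel) (use uv in auto)
    have i2: "integral\<^sup>L unit_lborel (\<lambda>t. indicator J t * (- 2 * ?e)) = (- 2 * ?e) * (v - u)"
      by (rule integral_indicator_interval_unit_lborel) (use uv J in auto)
    have "{a<..<b} \<in> sets borel" by simp
    then show ?thesis
      by (simp only: Bochner_Integration.integral_add[OF int_const int_const[OF J(4)]] i1 i2)
  qed
  finally show ?thesis by (simp add: algebra_simps)
qed

lemma block_cost_minimizer_le_quantile:
  assumes r1: "r = 1" and ab: "0 \<le> a" "a < b" "b \<le> 1"
    and min: "\<And>s. block_cost a b c \<le> block_cost a b s"
  shows "c \<le> quantile M ((a + b) / 2)"
proof (rule ccontr)
  define s where "s = (a + b) / 2"
  have s: "a < s" "s < b" "s < 1" unfolding s_def using ab by auto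
  assume nle: "\<not> c \<le> quantile M ((a + b) / 2)"
  define w where "w = (quantile M s + c) / 2"
  have "quantile M s < c" using nle unfolding s_def by simp
  then have w: "quantile M s < w" "w < c" unfolding w_def by auto
  define m where "m = min (cdf M w) b"
  have m: "s < m" "m \<le> b"
    unfolding m_def using less_cdf_of_quantile_less[OF real_distribution_M s(3) w(1)] s by auto
  have "block_cost a b w - block_cost a b c \<le> \<bar>w - c\<bar> * ((b - a) - 2 * (m - a))"
  proof (rule block_cost_diff_le_r1[OF r1, of a a m b "{a<..<m}"])
    fix t assume t: "t \<in> {a<..<m}" "t \<in> {0<..<1}"
    then have "f t \<le> w" using quantile_le_of_less_cdf[OF real_distribution_M, of t w] m_def by auto
    then show "\<bar>w - f t\<bar> - \<bar>c - f t\<bar> = - \<bar>w - c\<bar>" using w by auto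
  qed (use ab s m in auto)
  also have "\<dots> < 0" using w m unfolding s_def by (intro mult_pos_neg) auto
  finally show False using min[of w] by simp
qed

lemma Inf_cdf_ge_le_block_cost_minimizer:
  assumes r1: "r = 1" and ab: "0 \<le> a" "a < b" "b \<le> 1"
    and min: "\<And>s. block_cost a b c \<le> block_cost a b s"
  shows "Inf {z. (a + b) / 2 \<le> cdf M z} \<le> c"
proof (rule ccontr)
  interpret real_distribution M by (rule real_distribution_M)
  define s where "s = (a + b) / 2"
  have s: "a < s" "s < b" "0 < s" unfolding s_def using ab by auto
  define S where "S = {z. s \<le> cdf M z}"
  obtain z0 where z0: "cdf M z0 < s"
    using order_tendstoD(2)[OF cdf_lim_at_bot s(3)] by (metis eventually_at_bot_linorder order_refl)
  have S_bdd: "bdd_below S"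
  proof (rule bdd_belowI[of _ z0])
    fix z assume "z \<in> S"
    then show "z0 \<le> z" using z0 cdf_nondecreasing[of z z0] unfolding S_def by force
  qed
  assume nle: "\<not> Inf {z. (a + b) / 2 \<le> cdf M z} \<le> c"
  define w where "w = (c + Inf S) / 2"
  have w: "c < w" "w < Inf S" unfolding w_def using nle S_def s_def by auto
  have "cdf M w < s"
  proof (rule ccontr)
    assume "\<not> cdf M w < s"
    then have "Inf S \<le> w" unfolding S_def by (intro cInf_lower[OF _ S_bdd[unfolded S_def]]) simp
    then show False using w by simp
  qed
  define m where "m = max (cdf M w) a"
  have m: "m < s" "a \<le> m" unfolding m_def using \<open>cdf M w < s\<close> s by auto
  have "block_cost a b w - block_cost a b c \<le> \<bar>w - c\<bar> * ((b - a) - 2 * (b - m))"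
  proof (rule block_cost_diff_le_r1[OF r1, of a m b b "{m<..<b}"])
    fix t assume t: "t \<in> {m<..<b}" "t \<in> {0<..<1}"
    then have "w \<le> f t" using le_quantile_of_cdf_le[OF real_distribution_M, of t w] m_def by auto
    then show "\<bar>w - f t\<bar> - \<bar>c - f t\<bar> = - \<bar>w - c\<bar>" using w by auto
  qed (use ab s m in auto)
  also have "\<dots> < 0" using w m unfolding s_def by (intro mult_pos_neg) auto
  finally show False using min[of w] by simp
qed

lemma block_cost_minimizer_in_Qset:
  assumes "r = 1" "0 \<le> a" "a < b" "b \<le> 1" "\<And>s. block_cost a b c \<le> block_cost a b s"
  shows "c \<in> Qset M ((a + b) / 2)"
  using block_cost_minimizer_le_quantile[OF assms] Inf_cdf_ge_le_block_cost_minimizer[OF assms]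
  unfolding Qset_def quantile_def by simp

lemma Lr_norm_J_eq_block_cost:
  assumes ab: "0 \<le> a" "a < b" "b \<le> 1"
  shows "Lr_norm_J r a b (\<lambda>u. f u - c) = block_cost a b c powr (1 / r)"
proof -
  have "(LINT u:{a..b}|lborel. \<bar>f u - c\<bar> powr r) = block_cost a b c"
    unfolding block_cost_def
    by (subst set_integral_Icc_eq_unit_lborel[OF ab])
       (use integrable_block[of a b c] in \<open>auto simp: abs_minus_commute\<close>)
  then show ?thesis unfolding Lr_norm_J_def by simp
qed

lemma tau_eq_block_cost_minimizer:
  assumes r1: "r > 1" and ab: "0 \<le> a" "a < b" "b \<le> 1"
    and min: "\<And>s. block_cost a b c \<le> block_cost a b s"
  shows "tau r a b f = c"
  unfolding tau_def
proof (rule the_equality)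
  have nonneg: "0 \<le> block_cost a b s" for s
    unfolding block_cost_def by (intro integral_nonneg_AE AE_I2) auto
  have norm_le_iff: "Lr_norm_J r a b (\<lambda>u. f u - s) \<le> Lr_norm_J r a b (\<lambda>u. f u - s')
      \<longleftrightarrow> block_cost a b s \<le> block_cost a b s'" for s s'
    unfolding Lr_norm_J_eq_block_cost[OF ab] using nonneg r1 by (intro powr_inverse_le_iff) auto
  show "\<forall>s. Lr_norm_J r a b (\<lambda>u. f u - c) \<le> Lr_norm_J r a b (\<lambda>u. f u - s)"
    using min norm_le_iff by simp
  fix t assume "\<forall>s. Lr_norm_J r a b (\<lambda>u. f u - t) \<le> Lr_norm_J r a b (\<lambda>u. f u - s)"
  then have t: "block_cost a b t \<le> block_cost a b c" using norm_le_iff by simp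
  show "t = c"
  proof (rule ccontr)
    assume "t \<noteq> c"
    then have "block_cost a b ((t + c) / 2) < (block_cost a b t + block_cost a b c) / 2"
      by (rule block_cost_midpoint_less[OF r1 ab])
    also have "\<dots> \<le> block_cost a b c" using t by simp
    finally show False using min[of "(t + c) / 2"] by simp
  qed
qed

end

section \<open>Modifying monotone functions\<close>

lemma finite_gap_above:
  fixes a s :: real
  assumes "finite V" "a < s"
  shows "\<exists>w. a < w \<and> w \<le> s \<and> (\<forall>v\<in>V. v \<le> a \<or> w \<le> v)"
proof -
  define U where "U = {v\<in>V. a < v}"
  have U: "finite U" unfolding U_def using assms by simp
  show ?thesis
  proof (cases "U = {}")
    case True
    then show ?thesis using assms unfolding U_def by (intro exI[of _ s]) auto
  next
    case False
    have "a < Min U" using Min_in[OF U False] unfolding U_def by simp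
    moreover have "Min U \<le> v" if "v \<in> V" "a < v" for v
      using U that unfolding U_def by (intro Min_le) auto
    ultimately show ?thesis using assms by (intro exI[of _ "min s (Min U)"]) force
  qed
qed

lemma finite_gap_below:
  fixes a s :: real
  assumes "finite V" "s < a"
  shows "\<exists>w. w < a \<and> s \<le> w \<and> (\<forall>v\<in>V. a \<le> v \<or> v \<le> w)"
proof -
  obtain w where "- a < w" "w \<le> - s" "\<forall>v\<in>uminus ` V. v \<le> - a \<or> w \<le> v"
    using finite_gap_above[of "uminus ` V" "- a" "- s"] assms by auto
  then show ?thesis by (intro exI[of _ "- w"]) auto
qed

lemma mono_on_update_Ico:
  fixes G :: "real \<Rightarrow> real"
  assumes mono: "mono_on {0<..<1} G"
    and below: "\<And>t. t \<in> {0<..<1} \<Longrightarrow> t < a \<Longrightarrow> G t \<le> v"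
    and above: "\<And>t. t \<in> {0<..<1} \<Longrightarrow> b \<le> t \<Longrightarrow> v \<le> G t"
  shows "mono_on {0<..<1} (\<lambda>t. if a \<le> t \<and> t < b then v else G t)"
proof (rule mono_onI)
  fix t t' :: real assume t: "t \<in> {0<..<1}" "t' \<in> {0<..<1}" "t \<le> t'"
  show "(if a \<le> t \<and> t < b then v else G t) \<le> (if a \<le> t' \<and> t' < b then v else G t')"
    using below[OF t(1)] above[OF t(2)] mono_onD[OF mono t] t(3) by auto
qed

lemma mono_on_update_Ioo:
  fixes G :: "real \<Rightarrow> real"
  assumes mono: "mono_on {0<..<1} G"
    and below: "\<And>t. t \<in> {0<..<1} \<Longrightarrow> t \<le> a \<Longrightarrow> G t \<le> v"
    and above: "\<And>t. t \<in> {0<..<1} \<Longrightarrow> b \<le> t \<Longrightarrow> v \<le> G t"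
  shows "mono_on {0<..<1} (\<lambda>t. if a < t \<and> t < b then v else G t)"
proof (rule mono_onI)
  fix t t' :: real assume t: "t \<in> {0<..<1}" "t' \<in> {0<..<1}" "t \<le> t'"
  show "(if a < t \<and> t < b then v else G t) \<le> (if a < t' \<and> t' < b then v else G t')"
    using below[OF t(1)] above[OF t(2)] mono_onD[OF mono t] t(3) by auto
qed

definition clamp_at :: "real \<Rightarrow> real \<Rightarrow> (real \<Rightarrow> real) \<Rightarrow> real \<Rightarrow> real" where
  "clamp_at t0 w G t = (if t < t0 then min (G t) w else if t0 < t then max (G t) w else G t)"

lemma mono_on_clamp_at:
  assumes mono: "mono_on {0<..<1} G" and t0: "t0 \<in> {0<..<1}"
  shows "mono_on {0<..<1} (clamp_at t0 w G)"
proof (rule mono_onI)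
  fix t t' :: real assume tt: "t \<in> {0<..<1}" "t' \<in> {0<..<1}" "t \<le> t'"
  have "G t \<le> G t'" by (rule mono_onD[OF mono tt])
  moreover have "G t \<le> G t0" if "t \<le> t0" using tt t0 that by (intro mono_onD[OF mono]) auto
  moreover have "G t0 \<le> G t'" if "t0 \<le> t'" using tt t0 that by (intro mono_onD[OF mono]) auto
  ultimately show "clamp_at t0 w G t \<le> clamp_at t0 w G t'"
    using tt(3) unfolding clamp_at_def by (auto simp: min_def max_def)
qed

lemma clamp_at_image: "clamp_at t0 w G ` A \<subseteq> insert w (G ` A)"
  unfolding clamp_at_def by (auto simp: min_def max_def)

lemma abs_clamp_at_le:
  fixes g G :: "real \<Rightarrow> real"
  assumes g: "mono_on {0<..<1} g" and t: "t \<in> {0<..<1}" "t0 \<in> {0<..<1}"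
  shows "\<bar>clamp_at t0 (g t0) G t - g t\<bar> \<le> \<bar>G t - g t\<bar>"
    and "G t < g t0 \<and> t0 < t \<or> g t0 < G t \<and> t < t0 \<Longrightarrow> \<bar>clamp_at t0 (g t0) G t - g t\<bar> < \<bar>G t - g t\<bar>"
proof -
  let ?C = "clamp_at t0 (g t0) G t"
  consider "t < t0" | "t0 < t" | "t = t0" by linarith
  then have "(?C = G t \<or> g t \<le> ?C \<and> ?C < G t \<or> G t < ?C \<and> ?C \<le> g t)
      \<and> (G t < g t0 \<and> t0 < t \<or> g t0 < G t \<and> t < t0 \<longrightarrow> ?C \<noteq> G t)"
  proof cases
    case 1
    then have "g t \<le> g t0" using t by (intro mono_onD[OF g]) auto
    then show ?thesis using 1 unfolding clamp_at_def by auto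
  next
    case 2
    then have "g t0 \<le> g t" using t by (intro mono_onD[OF g]) auto
    then show ?thesis using 2 unfolding clamp_at_def by auto
  qed (simp add: clamp_at_def)
  then show "\<bar>?C - g t\<bar> \<le> \<bar>G t - g t\<bar>"
    and "G t < g t0 \<and> t0 < t \<or> g t0 < G t \<and> t < t0 \<Longrightarrow> \<bar>?C - g t\<bar> < \<bar>G t - g t\<bar>"
    by auto
qed

section \<open>Optimal quantizers\<close>

locale optimal_quantizer = quantile_cost +
  fixes n :: nat and x p :: "nat \<Rightarrow> real"
  assumes x: "Xi n x" and p: "Pi_n n p"
    and opt: "\<And>y q. Xi n y \<Longrightarrow> Pi_n n q \<Longrightarrow> d_r r (discr n x p) M \<le> d_r r (discr n y q) M"
begin

abbreviation Gopt :: "real \<Rightarrow> real" where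
  "Gopt \<equiv> step_quantile x p"

lemma n_pos: "1 \<le> n"
  by (rule Pi_n_imp_pos[OF p])

lemma mono_on_Gopt: "mono_on {0<..<1} Gopt"
  by (rule mono_on_step_quantile[OF x p])

lemma Gopt_image: "Gopt ` {0<..<1} \<subseteq> x ` {1..n}"
proof (rule image_subsetI)
  fix t :: real assume "t \<in> {0<..<1}"
  then show "Gopt t \<in> x ` {1..n}" unfolding step_quantile_def using block_index_bounds[OF p, of t] by auto
qed

lemma integrable_cost_Gopt: "integrable unit_lborel (\<lambda>t. \<bar>Gopt t - f t\<bar> powr r)"
  using Gopt_image finite_subset by (intro integrable_cost[OF mono_on_Gopt]) blast

lemma optimal_cost_le:
  assumes mono: "mono_on {0<..<1} G" and img: "G ` {0<..<1} \<subseteq> V" "finite V" "card V \<le> n"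
  shows "cost Gopt \<le> cost G"
proof -
  have fin: "finite (G ` {0<..<1})" using img finite_subset by blast
  have "card (G ` {0<..<1}) \<le> n" using img card_mono le_trans by blast
  then obtain y q where y: "Xi n y" and q: "Pi_n n q"
    and eq: "\<forall>t\<in>{0<..<1}. t \<notin> Psum q ` {0..n} \<longrightarrow> step_quantile y q t = G t"
    using step_quantile_representation[OF mono fin] by blast
  have meas: "(\<lambda>t. \<bar>H t - f t\<bar> powr r) \<in> borel_measurable unit_lborel" if "mono_on {0<..<1} H" for H
    using borel_measurable_unit_lborel_of_mono[OF that] borel_measurable_f by measurable
  have "cost (step_quantile y q) = cost G"
    unfolding cost_def
  proof (rule integral_cong_AE[OF meas[OF mono_on_step_quantile[OF y q]] meas[OF mono]])
    show "AE t in unit_lborel. \<bar>step_quantile y q t - f t\<bar> powr r = \<bar>G t - f t\<bar> powr r"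
      using AE_unit_lborel_not_in[of "Psum q ` {0..n}"] by (rule AE_mp) (use eq in auto)
  qed
  moreover have "cost Gopt powr (1 / r) \<le> cost (step_quantile y q) powr (1 / r)"
    using opt[OF y q] by (simp add: d_r_discr_eq_cost[OF x p] d_r_discr_eq_cost[OF y q])
  ultimately show ?thesis
    using powr_inverse_le_iff[OF cost_nonneg cost_nonneg, of r] r by simp
qed

lemma no_strict_improvement:
  assumes mono: "mono_on {0<..<1} G" and img: "G ` {0<..<1} \<subseteq> V" "finite V" "card V \<le> n"
    and le: "\<And>t. t \<in> {0<..<1} \<Longrightarrow> \<bar>G t - f t\<bar> powr r \<le> \<bar>Gopt t - f t\<bar> powr r"
    and ab: "0 \<le> a" "a < b" "b \<le> 1"
    and less: "\<And>t. a < t \<Longrightarrow> t < b \<Longrightarrow> \<bar>G t - f t\<bar> powr r < \<bar>Gopt t - f t\<bar> powr r"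
  shows False
proof -
  interpret prob_space unit_lborel by (rule prob_space_unit_lborel)
  have sub: "{a<..<b} \<subseteq> {0<..<1}" using ab by auto
  have "cost G < cost Gopt"
    unfolding cost_def
  proof (rule integral_less_AE[OF _ integrable_cost_Gopt])
    show "integrable unit_lborel (\<lambda>t. \<bar>G t - f t\<bar> powr r)"
      using img finite_subset by (intro integrable_cost[OF mono]) blast
    show "emeasure unit_lborel {a<..<b} \<noteq> 0" using ab by (simp add: emeasure_unit_lborel[OF sub])
    show "{a<..<b} \<in> sets unit_lborel" using sub by (simp add: sets_unit_lborel_iff)
    show "AE t in unit_lborel. t \<in> {a<..<b} \<longrightarrow> \<bar>G t - f t\<bar> powr r \<noteq> \<bar>Gopt t - f t\<bar> powr r"
      using less by (auto intro!: AE_I2 dest: less_imp_neq)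
    show "AE t in unit_lborel. \<bar>G t - f t\<bar> powr r \<le> \<bar>Gopt t - f t\<bar> powr r"
      using le by (auto intro!: AE_I2)
  qed
  then show False using optimal_cost_le[OF mono img] by simp
qed

lemma measure_lessThan_midpoint_le_Psum:
  assumes i: "1 \<le> i" "i < n" and xi: "x i < x (Suc i)"
  shows "measure M {..< (x i + x (Suc i)) / 2} \<le> Psum p i"
proof (rule ccontr)
  interpret real_distribution M by (rule real_distribution_M)
  define c where "c = (x i + x (Suc i)) / 2"
  define T where "T = measure M {..<c}"
  assume "\<not> measure M {..< (x i + x (Suc i)) / 2} \<le> Psum p i"
  then have T: "Psum p i < T" "T \<le> 1" unfolding T_def c_def by auto
  have P: "0 \<le> Psum p i" using Psum_nonneg[OF p] i by simp
  let ?G = "\<lambda>t. if Psum p i \<le> t \<and> t < T then x i else Gopt t"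
  have mono: "mono_on {0<..<1} ?G"
  proof (rule mono_on_update_Ico[OF mono_on_Gopt])
    fix t :: real assume t: "t \<in> {0<..<1}"
    show "t < Psum p i \<Longrightarrow> Gopt t \<le> x i" using step_quantile_le[OF x p t, of i] i by simp
    show "T \<le> t \<Longrightarrow> x i \<le> Gopt t" using step_quantile_ge[OF x p t, of i] i T xi by simp
  qed
  have img: "?G ` {0<..<1} \<subseteq> x ` {1..n}" using Gopt_image i by auto
  have less: "\<bar>?G t - f t\<bar> powr r < \<bar>Gopt t - f t\<bar> powr r"
    if t01: "t \<in> {0<..<1}" and t: "Psum p i \<le> t" "t < T" for t
  proof -
    have "f t < c" using quantile_less_of_less_measure_lessThan[OF real_distribution_M, of t c] t t01
      unfolding T_def by simp
    moreover have "x (Suc i) \<le> Gopt t" using step_quantile_ge[OF x p t01, of i] t i by simp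
    ultimately have "\<bar>x i - f t\<bar> < \<bar>Gopt t - f t\<bar>" using xi unfolding c_def by auto
    then show ?thesis using t r by (intro powr_less_mono2) auto
  qed
  show False
  proof (rule no_strict_improvement[OF mono img _ _ _ P T(1,2)])
    show "card (x ` {1..n}) \<le> n" using card_image_le[of "{1..n}" x] by simp
    show "\<bar>?G t - f t\<bar> powr r \<le> \<bar>Gopt t - f t\<bar> powr r" if "t \<in> {0<..<1}" for t
      using less[OF that] by (cases "Psum p i \<le> t \<and> t < T") (auto simp: less_imp_le)
  qed (use less P T in auto)
qed

lemma Psum_le_measure_atMost_midpoint:
  assumes i: "1 \<le> i" "i < n" and xi: "x i < x (Suc i)"
  shows "Psum p i \<le> measure M {.. (x i + x (Suc i)) / 2}"
proof (rule ccontr)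
  interpret real_distribution M by (rule real_distribution_M)
  define c where "c = (x i + x (Suc i)) / 2"
  define T where "T = cdf M c"
  assume "\<not> Psum p i \<le> measure M {.. (x i + x (Suc i)) / 2}"
  then have T: "T < Psum p i" "0 \<le> T" unfolding T_def c_def cdf_def by auto
  have P: "Psum p i \<le> 1" using Psum_le_1[OF p] i by simp
  let ?G = "\<lambda>t. if T < t \<and> t < Psum p i then x (Suc i) else Gopt t"
  have mono: "mono_on {0<..<1} ?G"
  proof (rule mono_on_update_Ioo[OF mono_on_Gopt])
    fix t :: real assume t: "t \<in> {0<..<1}"
    show "t \<le> T \<Longrightarrow> Gopt t \<le> x (Suc i)" using step_quantile_le[OF x p t, of i] i T xi by simp
    show "Psum p i \<le> t \<Longrightarrow> x (Suc i) \<le> Gopt t" using step_quantile_ge[OF x p t, of i] i by simp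
  qed
  have img: "?G ` {0<..<1} \<subseteq> x ` {1..n}" using Gopt_image i by auto
  have less: "\<bar>?G t - f t\<bar> powr r < \<bar>Gopt t - f t\<bar> powr r"
    if t01: "t \<in> {0<..<1}" and t: "T < t" "t < Psum p i" for t
  proof -
    have "c < f t" using less_quantile_of_cdf_less[OF real_distribution_M, of t c] t t01
      unfolding T_def by simp
    moreover have "Gopt t \<le> x i" using step_quantile_le[OF x p t01, of i] t i by simp
    ultimately have "\<bar>x (Suc i) - f t\<bar> < \<bar>Gopt t - f t\<bar>" using xi unfolding c_def by auto
    then show ?thesis using t r by (intro powr_less_mono2) auto
  qed
  show False
  proof (rule no_strict_improvement[OF mono img _ _ _ T(2,1) P])
    show "card (x ` {1..n}) \<le> n" using card_image_le[of "{1..n}" x] by simp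
    show "\<bar>?G t - f t\<bar> powr r \<le> \<bar>Gopt t - f t\<bar> powr r" if "t \<in> {0<..<1}" for t
      using less[OF that] by (cases "T < t \<and> t < Psum p i") (auto simp: less_imp_le)
  qed (use less P T in auto)
qed

text \<open>Replacing the value of a maximal run of equal values by \<open>w\<close> frees the value \<open>x i\<close>,
  so the modified step function is again admissible.\<close>

lemma block_cost_run_le:
  assumes jk: "1 \<le> j" "j \<le> i" "i \<le> k" "k \<le> n" and run: "\<And>l. j \<le> l \<Longrightarrow> l \<le> k \<Longrightarrow> x l = x i"
    and mono: "mono_on {0<..<1} (\<lambda>t. if Psum p (j - 1) \<le> t \<and> t < Psum p k then w else Gopt t)"
  shows "block_cost (Psum p (j - 1)) (Psum p k) (x i) \<le> block_cost (Psum p (j - 1)) (Psum p k) w"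
proof -
  let ?G = "\<lambda>t. if Psum p (j - 1) \<le> t \<and> t < Psum p k then w else Gopt t"
  have P: "Psum p (j - 1) \<le> Psum p (i - 1)" "Psum p i \<le> Psum p k"
    using jk by (simp_all add: Psum_mono[OF p])
  have "?G ` {0<..<1} \<subseteq> insert w (x ` ({1..n} - {i}))"
  proof (rule image_subsetI)
    fix t :: real assume t: "t \<in> {0<..<1}"
    show "?G t \<in> insert w (x ` ({1..n} - {i}))"
    proof (cases "Psum p (j - 1) \<le> t \<and> t < Psum p k")
      case False
      then have "\<not> (Psum p (i - 1) \<le> t \<and> t < Psum p i)" using P by linarith
      then show ?thesis using False step_quantile_in_image[OF p t] by simp
    qed simp
  qed
  moreover have "card (insert w (x ` ({1..n} - {i}))) \<le> n"
    using jk by (intro card_insert_image_remove_le) simp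
  ultimately have "cost Gopt \<le> cost ?G" by (intro optimal_cost_le[OF mono]) simp_all
  moreover have "cost ?G = cost Gopt + (block_cost (Psum p (j - 1)) (Psum p k) w
      - block_cost (Psum p (j - 1)) (Psum p k) (x i))"
  proof (rule cost_update_const[OF integrable_cost_Gopt])
    fix t :: real assume t: "t \<in> {0<..<1}" "Psum p (j - 1) \<le> t" "t < Psum p k"
    have "j \<le> k" using jk by simp
    then show "Gopt t = x i" by (rule step_quantile_eq_on_run[OF p t(1) jk(1) _ jk(4) t(2,3) run])
  qed
  ultimately show ?thesis by simp
qed

lemma block_cost_le_of_gap_above:
  assumes i: "1 \<le> i" "i \<le> n" and w: "x i < w" and gap: "\<forall>v\<in>x ` {1..n}. v \<le> x i \<or> w \<le> v"
  shows "block_cost (Psum p (i - 1)) (Psum p i) (x i) \<le> block_cost (Psum p (i - 1)) (Psum p i) w"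
proof (rule ccontr)
  assume "\<not> ?thesis"
  then have less: "block_cost (Psum p (i - 1)) (Psum p i) w < block_cost (Psum p (i - 1)) (Psum p i) (x i)"
    by simp
  obtain k where k: "i \<le> k" "k \<le> n" and run: "\<And>l. i \<le> l \<Longrightarrow> l \<le> k \<Longrightarrow> x l = x i"
    and next_gt: "k < n \<Longrightarrow> x i < x (Suc k)"
    using Xi_run_end[OF x i] by blast
  have P: "Psum p (i - 1) \<le> Psum p i" "Psum p i \<le> Psum p k"
    using i k by (auto intro!: Psum_mono[OF p])
  have mono: "mono_on {0<..<1} (\<lambda>t. if Psum p (i - 1) \<le> t \<and> t < Psum p k then w else Gopt t)"
  proof (rule mono_on_update_Ico[OF mono_on_Gopt])
    fix t :: real assume t: "t \<in> {0<..<1}"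
    show "t < Psum p (i - 1) \<Longrightarrow> Gopt t \<le> w"
      using step_quantile_le[OF x p t, of i] P i w by simp
    assume "Psum p k \<le> t"
    moreover from this have "k < n" using t k Psum_eq_1[OF p] by (cases "k = n") auto
    ultimately have "x (Suc k) \<le> Gopt t" "x i < x (Suc k)"
      using step_quantile_ge[OF x p t, of k] next_gt by auto
    moreover have "x (Suc k) \<le> x i \<or> w \<le> x (Suc k)" using gap \<open>k < n\<close> by auto
    ultimately show "w \<le> Gopt t" by linarith
  qed
  have "block_cost (Psum p i) (Psum p k) w \<le> block_cost (Psum p i) (Psum p k) (x i)"
    by (rule block_cost_right_le_of_less_up[OF w P(2) less])
  then have "block_cost (Psum p (i - 1)) (Psum p k) w < block_cost (Psum p (i - 1)) (Psum p k) (x i)"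
    using less block_cost_split[OF P] by simp
  then show False using block_cost_run_le[OF i(1) order.refl k run mono] by simp
qed

lemma block_cost_le_of_gap_below:
  assumes i: "1 \<le> i" "i \<le> n" and w: "w < x i" and gap: "\<forall>v\<in>x ` {1..n}. x i \<le> v \<or> v \<le> w"
  shows "block_cost (Psum p (i - 1)) (Psum p i) (x i) \<le> block_cost (Psum p (i - 1)) (Psum p i) w"
proof (rule ccontr)
  assume "\<not> ?thesis"
  then have less: "block_cost (Psum p (i - 1)) (Psum p i) w < block_cost (Psum p (i - 1)) (Psum p i) (x i)"
    by simp
  obtain j where j: "1 \<le> j" "j \<le> i" and run: "\<And>l. j \<le> l \<Longrightarrow> l \<le> i \<Longrightarrow> x l = x i"
    and prev_lt: "1 < j \<Longrightarrow> x (j - 1) < x i"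
    using Xi_run_start[OF x i] by blast
  have P: "Psum p (j - 1) \<le> Psum p (i - 1)" "Psum p (i - 1) \<le> Psum p i"
    using i j by (auto intro!: Psum_mono[OF p])
  have mono: "mono_on {0<..<1} (\<lambda>t. if Psum p (j - 1) \<le> t \<and> t < Psum p i then w else Gopt t)"
  proof (rule mono_on_update_Ico[OF mono_on_Gopt])
    fix t :: real assume t: "t \<in> {0<..<1}"
    show "w \<le> Gopt t" if "Psum p i \<le> t"
    proof -
      have "i < n" using that t i Psum_eq_1[OF p] by (cases "i = n") auto
      then show ?thesis
        using step_quantile_ge[OF x p t that] Xi_le[OF x, of i "Suc i"] i w by simp
    qed
    assume "t < Psum p (j - 1)"
    moreover from this have "1 < j" using t j by (cases "j = 1") auto
    ultimately have le: "Gopt t \<le> x (j - 1)" "x (j - 1) < x i"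
      using step_quantile_le[OF x p t, of "j - 1"] prev_lt j i by auto
    have "j - 1 \<in> {1..n}" using j i \<open>1 < j\<close> by auto
    then have "x i \<le> x (j - 1) \<or> x (j - 1) \<le> w" using gap by blast
    with le show "Gopt t \<le> w" by linarith
  qed
  have "block_cost (Psum p (j - 1)) (Psum p (i - 1)) w \<le> block_cost (Psum p (j - 1)) (Psum p (i - 1)) (x i)"
    by (rule block_cost_left_le_of_less_down[OF w P(1) less])
  then have "block_cost (Psum p (j - 1)) (Psum p i) w < block_cost (Psum p (j - 1)) (Psum p i) (x i)"
    using less block_cost_split[OF P] by simp
  then show False using block_cost_run_le[OF j order.refl i(2) run mono] by simp
qed

lemma block_cost_minimal:
  assumes i: "1 \<le> i" "i \<le> n"
  shows "block_cost (Psum p (i - 1)) (Psum p i) (x i) \<le> block_cost (Psum p (i - 1)) (Psum p i) s"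
proof (rule ccontr)
  let ?bc = "block_cost (Psum p (i - 1)) (Psum p i)"
  assume "\<not> ?thesis"
  then have less: "?bc s < ?bc (x i)" by simp
  then have "x i \<noteq> s" by auto
  then consider "x i < s" | "s < x i" by linarith
  then show False
  proof cases
    case 1
    then obtain w where w: "x i < w" "w \<le> s" "\<forall>v\<in>x ` {1..n}. v \<le> x i \<or> w \<le> v"
      using finite_gap_above[of "x ` {1..n}"] by blast
    have "?bc w < ?bc (x i)" using w by (intro block_cost_less_between[OF less]) auto
    then show False using block_cost_le_of_gap_above[OF i w(1,3)] by simp
  next
    case 2
    then obtain w where w: "w < x i" "s \<le> w" "\<forall>v\<in>x ` {1..n}. x i \<le> v \<or> v \<le> w"
      using finite_gap_below[of "x ` {1..n}"] by blast
    have "?bc w < ?bc (x i)" using w by (intro block_cost_less_between[OF less]) auto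
    then show False using block_cost_le_of_gap_below[OF i w(1,3)] by simp
  qed
qed

lemma x_in_Qset_of_r_eq_1:
  assumes r1: "r = 1" and i: "1 \<le> i" "i \<le> n" and P: "Psum p (i - 1) < Psum p i"
  shows "x i \<in> Qset M ((Psum p (i - 1) + Psum p i) / 2)"
  using Psum_nonneg[OF p] Psum_le_1[OF p] i
  by (intro block_cost_minimizer_in_Qset[OF r1 _ P _ block_cost_minimal[OF i]]) auto

lemma x_eq_tau_of_r_gt_1:
  assumes r1: "r > 1" and i: "1 \<le> i" "i \<le> n" and P: "Psum p (i - 1) < Psum p i"
  shows "x i = tau r (Psum p (i - 1)) (Psum p i) f"
  using Psum_nonneg[OF p] Psum_le_1[OF p] i
  by (intro tau_eq_block_cost_minimizer[OF r1 _ P _ block_cost_minimal[OF i], symmetric]) auto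

lemma discr_eq_of_small_support:
  assumes fin: "finite (supp M)" and card: "card (supp M) \<le> n"
  shows "discr n x p = M"
proof -
  have "cost Gopt \<le> cost f"
    using quantile_in_supp[OF real_distribution_M]
    by (intro optimal_cost_le[OF mono_on_quantile[OF real_distribution_M] _ fin card]) auto
  also have "cost f = 0" unfolding cost_def using r by simp
  finally have "cost Gopt = 0" using cost_nonneg[of Gopt] by simp
  then have "AE t in unit_lborel. \<bar>Gopt t - f t\<bar> powr r = 0"
    unfolding cost_def by (subst (asm) integral_nonneg_eq_0_iff_AE[OF integrable_cost_Gopt]) auto
  then have ae: "AE t in unit_lborel. Gopt t = f t" by (rule AE_mp) (auto intro!: AE_I2)
  have "discr n x p = distr unit_lborel borel (quantile (discr n x p))"
    by (rule distr_quantile[OF real_distribution_discr[OF p], symmetric])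
  also have "\<dots> = distr unit_lborel borel Gopt"
    by (rule distr_cong) (auto simp: quantile_discr[OF x p])
  also have "\<dots> = distr unit_lborel borel f"
    by (rule distr_cong_AE)
       (use ae borel_measurable_unit_lborel_of_mono[OF mono_on_Gopt] borel_measurable_f in auto)
  also have "\<dots> = M" by (rule distr_quantile[OF real_distribution_M])
  finally show ?thesis .
qed

text \<open>If one of the values \<open>x i\<close> is not needed, it can be spent on \<open>f t0\<close> at a point where
  \<open>Gopt\<close> misses \<open>f\<close>: clamping \<open>Gopt\<close> towards \<open>f t0\<close> strictly decreases the error on the part of
  the block of \<open>t0\<close> on the side where \<open>f\<close> moves away from \<open>Gopt\<close>.\<close>

lemma quantile_eq_Gopt_of_spare_value:
  assumes i: "i \<in> {1..n}" and img: "Gopt ` {0<..<1} \<subseteq> x ` ({1..n} - {i})"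
    and t0: "t0 \<in> {0<..<1}" "t0 \<notin> Psum p ` {0..n}"
  shows "f t0 = Gopt t0"
proof (rule ccontr)
  assume ne: "f t0 \<noteq> Gopt t0"
  define G where "G = clamp_at t0 (f t0) Gopt"
  define j where "j = block_index p t0"
  have jb: "1 \<le> j" "j \<le> n" "Psum p (j - 1) \<le> t0" "t0 < Psum p j"
    using block_index_bounds[OF p, of t0] t0 unfolding j_def by auto
  have "j - 1 \<in> {0..n}" using jb by simp
  then have "Psum p (j - 1) \<noteq> t0" using t0(2) by (metis image_eqI)
  then have j: "1 \<le> j" "j \<le> n" "Psum p (j - 1) < t0" "t0 < Psum p j" using jb by auto
  have P: "0 \<le> Psum p (j - 1)" "Psum p j \<le> 1"
    using Psum_nonneg[OF p] Psum_le_1[OF p] j by auto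
  have Gopt_j: "Gopt t = x j" if "Psum p (j - 1) < t" "t < Psum p j" for t
    by (rule step_quantile_eq_on_run[OF p _ j(1) order.refl j(2)]) (use that P in auto)
  have "G ` {0<..<1} \<subseteq> insert (f t0) (x ` ({1..n} - {i}))"
    using clamp_at_image[of t0 "f t0" Gopt "{0<..<1}"] img unfolding G_def by blast
  note no_strict = no_strict_improvement[OF mono_on_clamp_at[OF mono_on_Gopt t0(1)] this[unfolded G_def] _
      card_insert_image_remove_le[OF i]]
  note closer = abs_clamp_at_le[OF mono_on_quantile[OF real_distribution_M] _ t0(1), of _ Gopt]
  have le: "\<bar>G t - f t\<bar> powr r \<le> \<bar>Gopt t - f t\<bar> powr r" if "t \<in> {0<..<1}" for t
    using closer(1)[OF that] r unfolding G_def by (intro powr_mono2) auto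
  have less: "\<bar>G t - f t\<bar> powr r < \<bar>Gopt t - f t\<bar> powr r"
    if "t \<in> {0<..<1}" "Gopt t < f t0 \<and> t0 < t \<or> f t0 < Gopt t \<and> t < t0" for t
    using closer(2)[OF that] r unfolding G_def by (intro powr_less_mono2) auto
  have "x j \<noteq> f t0" using ne Gopt_j[OF j(3,4)] by auto
  then consider "x j < f t0" | "f t0 < x j" by linarith
  then show False
  proof cases
    case 1
    show False
    proof (rule no_strict[OF _ le[unfolded G_def] _ j(4) P(2)])
      fix t assume t: "t0 < t" "t < Psum p j"
      then have t01: "t \<in> {0<..<1}" using t0 P by auto
      have "Gopt t = x j" using Gopt_j t j(3) by simp
      then show "\<bar>clamp_at t0 (f t0) Gopt t - f t\<bar> powr r < \<bar>Gopt t - f t\<bar> powr r"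
        using less[unfolded G_def, OF t01] t 1 by simp
    qed (use t0 in auto)
  next
    case 2
    show False
    proof (rule no_strict[OF _ le[unfolded G_def] P(1) j(3)])
      fix t assume t: "Psum p (j - 1) < t" "t < t0"
      then have t01: "t \<in> {0<..<1}" using t0 P by auto
      have "Gopt t = x j" using Gopt_j t j(4) by simp
      then show "\<bar>clamp_at t0 (f t0) Gopt t - f t\<bar> powr r < \<bar>Gopt t - f t\<bar> powr r"
        using less[unfolded G_def, OF t01] t 2 by simp
    qed (use t0 in auto)
  qed
qed

lemma Psum_less_of_large_support:
  assumes big: "\<not> (finite (supp M) \<and> card (supp M) \<le> n)" and i: "1 \<le> i" "i \<le> n"
  shows "Psum p (i - 1) < Psum p i"
proof (rule ccontr)
  assume "\<not> Psum p (i - 1) < Psum p i"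
  then have empty: "\<not> (Psum p (i - 1) \<le> t \<and> t < Psum p i)" for t by linarith
  have img: "Gopt ` {0<..<1} \<subseteq> x ` ({1..n} - {i})"
    using step_quantile_in_image[OF p _ empty] by blast
  have "supp M \<subseteq> x ` ({1..n} - {i})"
    using quantile_eq_Gopt_of_spare_value[OF _ img] img i
    by (intro supp_subset_of_quantile_in[OF real_distribution_M, of "Psum p ` {0..n}"]) auto
  moreover have "card ({1..n} - {i}) \<le> card {1..n}" by (rule card_mono) auto
  then have "card (x ` ({1..n} - {i})) \<le> n"
    using card_image_le[of "{1..n} - {i}" x] by simp
  ultimately have "finite (supp M)" "card (supp M) \<le> n"
    using finite_subset[of "supp M" "x ` ({1..n} - {i})"] card_mono[of "x ` ({1..n} - {i})" "supp M"]
    by auto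
  then show False using big by simp
qed

text \<open>Merging the mass of two consecutive equal values into the first one yields another
  optimal pair \<open>(x, q)\<close> with an empty block.\<close>

lemma x_less_Suc_of_large_support:
  assumes big: "\<not> (finite (supp M) \<and> card (supp M) \<le> n)" and i: "1 \<le> i" "i < n"
  shows "x i < x (Suc i)"
proof (rule ccontr)
  assume "\<not> x i < x (Suc i)"
  then have eq: "x (Suc i) = x i" using x i unfolding Xi_def by force
  define q where "q j = (if j = i then p i + p (Suc i) else if j = Suc i then 0 else p j)" for j
  have nonneg: "\<And>j. j \<in> {1..n} \<Longrightarrow> 0 \<le> p j" using p unfolding Pi_n_def by auto
  have S: "finite {1..n}" "i \<in> {1..n}" "Suc i \<in> {1..n}" using i by auto
  have q: "Pi_n n q"
    unfolding Pi_n_def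
  proof
    show "\<forall>j\<in>{1..n}. 0 \<le> q j" using nonneg S unfolding q_def by (auto intro: add_nonneg_nonneg)
    have "(\<Sum>j=1..n. q j) = (\<Sum>j=1..n. p j)" by (rule sum_swap_pair[OF S]) (auto simp: q_def)
    then show "(\<Sum>j=1..n. q j) = 1" using p unfolding Pi_n_def by simp
  qed
  have "discr n x q = discr n x p"
    unfolding discr_def
  proof (intro arg_cong[where f="measure_of UNIV (sets borel)"] ext sum_swap_pair[OF S])
    fix A
    have "ennreal (p i + p (Suc i)) = ennreal (p i) + ennreal (p (Suc i))"
      using nonneg S by (intro ennreal_plus) auto
    then show "ennreal (q i) * indicator A (x i) + ennreal (q (Suc i)) * indicator A (x (Suc i))
        = ennreal (p i) * indicator A (x i) + ennreal (p (Suc i)) * indicator A (x (Suc i))"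
      unfolding q_def eq by (simp add: distrib_right)
  qed (auto simp: q_def)
  then interpret q_opt: optimal_quantizer r M n x q
    using opt q x by unfold_locales simp_all
  have "Psum q (Suc i - 1) < Psum q (Suc i)"
    using i by (intro q_opt.Psum_less_of_large_support[OF big]) auto
  then show False by (simp add: Psum_Suc q_def)
qed

end

theorem theorem5p11:
  fixes r :: real and M :: "real measure" and n :: nat and x p :: "nat \<Rightarrow> real"
  assumes r: "r \<ge> 1"
    and M: "in_Pr r M"
    and x: "Xi n x" and p: "Pi_n n p"
    and opt: "\<And>y q. Xi n y \<Longrightarrow> Pi_n n q \<Longrightarrow> d_r r (discr n x p) M \<le> d_r r (discr n y q) M"
  shows
    "(\<forall>i. 1 \<le> i \<and> i \<le> n - 1 \<and> x i < x (Suc i) \<longrightarrow>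
        measure M {..< (x i + x (Suc i)) / 2} \<le> Psum p i \<and>
        Psum p i \<le> measure M {.. (x i + x (Suc i)) / 2})
   \<and> (\<forall>i. 1 \<le> i \<and> i \<le> n \<and> Psum p (i - 1) < Psum p i \<longrightarrow>
        (r = 1 \<longrightarrow> x i \<in> Qset M ((Psum p (i - 1) + Psum p i) / 2)) \<and>
        (r > 1 \<longrightarrow> x i = tau r (Psum p (i - 1)) (Psum p i) (quantile M)))
   \<and> (finite (supp M) \<and> card (supp M) \<le> n \<longrightarrow> discr n x p = M)
   \<and> (\<not> (finite (supp M) \<and> card (supp M) \<le> n) \<longrightarrow>
        (\<forall>i. 1 \<le> i \<and> i \<le> n - 1 \<longrightarrow> x i < x (Suc i)) \<and>
        (\<forall>i. 1 \<le> i \<and> i \<le> n \<longrightarrow> Psum p (i - 1) < Psum p i))"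
proof -
  interpret optimal_quantizer r M n x p
    using r M x p opt by unfold_locales
  show ?thesis
  proof (intro conjI allI impI)
    fix i assume "1 \<le> i \<and> i \<le> n - 1 \<and> x i < x (Suc i)"
    then have i: "1 \<le> i" "i < n" "x i < x (Suc i)" using n_pos by auto
    show "measure M {..< (x i + x (Suc i)) / 2} \<le> Psum p i"
      by (rule measure_lessThan_midpoint_le_Psum[OF i])
    show "Psum p i \<le> measure M {.. (x i + x (Suc i)) / 2}"
      by (rule Psum_le_measure_atMost_midpoint[OF i])
  next
    fix i assume "1 \<le> i \<and> i \<le> n \<and> Psum p (i - 1) < Psum p i"
    then show "r = 1 \<Longrightarrow> x i \<in> Qset M ((Psum p (i - 1) + Psum p i) / 2)"
      and "r > 1 \<Longrightarrow> x i = tau r (Psum p (i - 1)) (Psum p i) (quantile M)"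
      using x_in_Qset_of_r_eq_1 x_eq_tau_of_r_gt_1 by auto
  qed (use discr_eq_of_small_support x_less_Suc_of_large_support Psum_less_of_large_support n_pos
       in auto)
qed

end
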